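(* Let $(M,\varphi,g)$ be an anti-paraKähler manifold of dimension $2k$ and $(TM,g_{BS})$ its tangent bundle with the Berger type deformed Sasaki metric. Let $h$ be another Riemannian metric on $M$ (anti-paraHermitian with respect to some almost paracomplex structure $\varphi_1$). Then the projection $\pi:(TM,g_{BS})\to(M,h)$ is a harmonic map if and only if $h$ is harmonic with respect to $g$, i.e. $g^{ij}\big({}^h\Gamma^l_{ij}-\Gamma^l_{ij}\big)=0$ for all $l$, where $\Gamma^l_{ij}$ and ${}^h\Gamma^l_{ij}$ are the Christoffel symbols of $g$ and $h$.
   Context: An anti-paraKähler manifold $(M,\varphi,g)$ of dimension $2k$ consists of a Riemannian metric $g$ and a $(1,1)$-tensor field $\varphi$ with $\varphi^2=\mathrm{id}$ whose $(+1)$- and $(-1)$-eigenbundles both have rank $k$, such that $g(\varphi X,Y)=g(X,\varphi Y)$ for all vector fields $X,Y$ and $\nabla\varphi=0$, where $\nabla$ is the Levi-Civita connection of $g$. Let $\pi:TM\to M$ be the tangent bundle; points of $TM$ are denoted $u$. For a vector field $X$ on $M$, $X^H$ denotes its horizontal lift to $TM$ with respect to $\nabla$ and $X^V$ its vertical lift. For a constant $\delta$, the Berger type deformed Sasaki metric $g_{BS}$ on $TM$ is the Riemannian metric defined at $u\in TM$ by $g_{BS}(X^H,Y^H)=g(X,Y)$, $g_{BS}(X^H,Y^V)=g_{BS}(X^V,Y^H)=0$, $g_{BS}(X^V,Y^V)=g(X,Y)+\delta^2 g(X,\varphi u)\,g(Y,\varphi u)$ (all evaluated at $\pi(u)$).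 An almost paracomplex structure $\varphi_1$ is a $(1,1)$-tensor with $\varphi_1^2=\mathrm{id}$ whose $\pm1$-eigenbundles have equal rank, and $h$ is anti-paraHermitian if $h(\varphi_1X,Y)=h(X,\varphi_1Y)$. For a smooth map $f$ between Riemannian manifolds, the tension field is $\tau(f)=\mathrm{trace}\,\beta(f)$ where $\beta(f)(X,Y)=\nabla^{f}_X(df(Y))-df(\nabla_XY)$; $f$ is harmonic if $\tau(f)=0$. *)

theory Defs
  imports "HOL-Analysis.Analysis"
begin

text \<open>A manifold is modelled by an open
coordinate domain U in real^'n; tensor fields are matrix-valued functions;
the tangent bundle TU is modelled as U x real^'n inside real^('n+'n)
(Inl = base coordinates x^i, Inr = fibre coordinates y^i).\<close>

definition pd :: "'i::finite \<Rightarrow> (real^'i \<Rightarrow> real) \<Rightarrow> real^'i \<Rightarrow> real" where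
  "pd i f x = deriv (\<lambda>t. f (x + t *\<^sub>R axis i 1)) 0"

definition smooth_on :: "(real^'i::finite) set \<Rightarrow> (real^'i \<Rightarrow> real) \<Rightarrow> bool" where
  "smooth_on U f \<longleftrightarrow> (\<forall>ds::'i list. (foldr pd ds f) differentiable_on U)"

definition riem_metric :: "(real^'i::finite) set \<Rightarrow> (real^'i \<Rightarrow> real^'i^'i) \<Rightarrow> bool" where
  "riem_metric U G \<longleftrightarrow> (\<forall>a b. smooth_on U (\<lambda>x. G x $ a $ b)) \<and>
     (\<forall>x\<in>U. transpose (G x) = G x \<and> (\<forall>v. v \<noteq> 0 \<longrightarrow> v \<bullet> (G x *v v) > 0))"

definition christoffel :: "(real^'i::finite \<Rightarrow> real^'i^'i) \<Rightarrow> real^'i \<Rightarrow> 'i \<Rightarrow> 'i \<Rightarrow> 'i \<Rightarrow> real" where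
  "christoffel G x l i j = (1/2) * (\<Sum>m\<in>UNIV. matrix_inv (G x) $ l $ m *
      (pd i (\<lambda>z. G z $ m $ j) x + pd j (\<lambda>z. G z $ m $ i) x - pd m (\<lambda>z. G z $ i $ j) x))"

definition tension :: "(real^'i::finite \<Rightarrow> real^'i^'i) \<Rightarrow> (real^'j::finite \<Rightarrow> real^'j^'j)
    \<Rightarrow> (real^'i \<Rightarrow> real^'j) \<Rightarrow> real^'i \<Rightarrow> 'j \<Rightarrow> real" where
  "tension G H F x l = (\<Sum>a\<in>UNIV. \<Sum>b\<in>UNIV. matrix_inv (G x) $ a $ b *
      (pd a (pd b (\<lambda>z. F z $ l)) x
       - (\<Sum>c\<in>UNIV. christoffel G x c a b * pd c (\<lambda>z. F z $ l) x)
       + (\<Sum>m\<in>UNIV. \<Sum>q\<in>UNIV. christoffel H (F x) l m q * pd a (\<lambda>z. F z $ m) x * pd b (\<lambda>z. F z $ q) x)))"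

definition harmonic_map :: "(real^'i::finite) set \<Rightarrow> (real^'i \<Rightarrow> real^'i^'i) \<Rightarrow> (real^'j::finite \<Rightarrow> real^'j^'j)
    \<Rightarrow> (real^'i \<Rightarrow> real^'j) \<Rightarrow> bool" where
  "harmonic_map W G H F \<longleftrightarrow> (\<forall>x\<in>W. \<forall>l. tension G H F x l = 0)"

definition apc_structure :: "(real^'i::finite) set \<Rightarrow> (real^'i \<Rightarrow> real^'i^'i) \<Rightarrow> bool" where
  "apc_structure U \<phi> \<longleftrightarrow> (\<forall>a b. smooth_on U (\<lambda>x. \<phi> x $ a $ b)) \<and>
     (\<forall>x\<in>U. \<phi> x ** \<phi> x = mat 1 \<and> dim {v. \<phi> x *v v = v} = dim {v. \<phi> x *v v = - v})"

definition anti_paraHermitian :: "(real^'i::finite) set \<Rightarrow> (real^'i \<Rightarrow> real^'i^'i) \<Rightarrow> (real^'i \<Rightarrow> real^'i^'i) \<Rightarrow> bool" where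
  "anti_paraHermitian U G \<phi> \<longleftrightarrow> (\<forall>x\<in>U. transpose (\<phi> x) ** G x = G x ** \<phi> x)"

definition covd_phi :: "(real^'i::finite \<Rightarrow> real^'i^'i) \<Rightarrow> (real^'i \<Rightarrow> real^'i^'i) \<Rightarrow> real^'i \<Rightarrow> 'i \<Rightarrow> 'i \<Rightarrow> 'i \<Rightarrow> real" where
  "covd_phi G \<phi> x i l j = pd i (\<lambda>z. \<phi> z $ l $ j) x
     + (\<Sum>m\<in>UNIV. christoffel G x l i m * \<phi> x $ m $ j)
     - (\<Sum>m\<in>UNIV. \<phi> x $ l $ m * christoffel G x m i j)"

definition anti_paraKaehler :: "(real^'i::finite) set \<Rightarrow> (real^'i \<Rightarrow> real^'i^'i) \<Rightarrow> (real^'i \<Rightarrow> real^'i^'i) \<Rightarrow> bool" where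
  "anti_paraKaehler U G \<phi> \<longleftrightarrow> open U \<and> riem_metric U G \<and> apc_structure U \<phi> \<and>
     anti_paraHermitian U G \<phi> \<and> (\<forall>x\<in>U. \<forall>i l j. covd_phi G \<phi> x i l j = 0)"

definition base :: "real^('n::finite + 'n) \<Rightarrow> real^'n" where
  "base p = (\<chi> i. p $ Inl i)"

definition fib :: "real^('n::finite + 'n) \<Rightarrow> real^'n" where
  "fib p = (\<chi> i. p $ Inr i)"

definition pair_tb :: "real^'n::finite \<Rightarrow> real^'n \<Rightarrow> real^('n + 'n)" where
  "pair_tb X V = (\<chi> a. case a of Inl i \<Rightarrow> X $ i | Inr i \<Rightarrow> V $ i)"

definition conn :: "(real^'n::finite \<Rightarrow> real^'n^'n) \<Rightarrow> real^'n \<Rightarrow> real^'n \<Rightarrow> real^'n \<Rightarrow> real^'n" where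
  "conn G x y X = (\<chi> m. \<Sum>i\<in>UNIV. \<Sum>j\<in>UNIV. christoffel G x m i j * X $ i * y $ j)"

definition hlift :: "(real^'n::finite \<Rightarrow> real^'n^'n) \<Rightarrow> real^('n + 'n) \<Rightarrow> real^'n \<Rightarrow> real^('n + 'n)" where
  "hlift G p X = pair_tb X (- conn G (base p) (fib p) X)"

definition vlift :: "real^'n::finite \<Rightarrow> real^('n + 'n)" where
  "vlift V = pair_tb 0 V"

text \<open>Every tangent vector xi at p decomposes uniquely as xi = (hcomp xi)^H + (vcomp xi)^V.\<close>
definition hcomp :: "real^('n::finite + 'n) \<Rightarrow> real^'n" where
  "hcomp \<xi> = base \<xi>"

definition vcomp :: "(real^'n::finite \<Rightarrow> real^'n^'n) \<Rightarrow> real^('n + 'n) \<Rightarrow> real^('n + 'n) \<Rightarrow> real^'n" where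
  "vcomp G p \<xi> = fib \<xi> + conn G (base p) (fib p) (base \<xi>)"

definition gm :: "(real^'n::finite \<Rightarrow> real^'n^'n) \<Rightarrow> real^'n \<Rightarrow> real^'n \<Rightarrow> real^'n \<Rightarrow> real" where
  "gm G x u v = u \<bullet> (G x *v v)"

definition gBS :: "real \<Rightarrow> (real^'n::finite \<Rightarrow> real^'n^'n) \<Rightarrow> (real^'n \<Rightarrow> real^'n^'n)
    \<Rightarrow> real^('n + 'n) \<Rightarrow> real^('n + 'n) \<Rightarrow> real^('n + 'n) \<Rightarrow> real" where
  "gBS \<delta> G \<phi> p \<xi> \<eta> =
     (let x = base p; phiu = \<phi> x *v fib p; V = vcomp G p \<xi>; W = vcomp G p \<eta> in
      gm G x (hcomp \<xi>) (hcomp \<eta>) + gm G x V W + \<delta>^2 * gm G x V phiu * gm G x W phiu)"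

definition gBS_matrix :: "real \<Rightarrow> (real^'n::finite \<Rightarrow> real^'n^'n) \<Rightarrow> (real^'n \<Rightarrow> real^'n^'n)
    \<Rightarrow> real^('n + 'n) \<Rightarrow> real^('n + 'n)^('n + 'n)" where
  "gBS_matrix \<delta> G \<phi> p = (\<chi> a b. gBS \<delta> G \<phi> p (axis a 1) (axis b 1))"

definition tb :: "(real^'n::finite) set \<Rightarrow> (real^('n + 'n)) set" where
  "tb U = {p. base p \<in> U}"

end

theory Submission
  imports Defs
begin

(*
  The projection base(x, y) = x has vanishing second coordinate derivatives and first derivatives
  selecting the horizontal coordinates, and the upper left block of the inverse of the matrix Gt of
  g_BS is g^-1.  Hence tau(base)^l = g^ij hGamma^l_ij - Gt^ab tGamma^l_ab, and it suffices to show
  that the contracted Christoffel symbols Gt^ab tGamma^l_ab of g_BS at (x, y) equal g^ij Gamma^l_ij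
  at x.  Both sides are evaluated with

    g^ab Gamma^c_ab = - d_a g^ca - 1/2 g^ca tr (g^-1 d_a g).

  In the adapted frame Gt = P^T diag (g, K) P with P unipotent and K = g + delta^2 w w^T,
  w = g (phi y), so tr (Gt^-1 d_a Gt) = tr (g^-1 d_a g) + tr (K^-1 d_a K).  Since phi is parallel,
  the horizontal derivative d_i w - N^b_i d_(y^b) w is Gamma_i^T w, so K obeys the same compatibility
  equation d_i K - N^b_i d_(y^b) K = Gamma_i^T K + K Gamma_i as g; as the row of Gt^-1 is
  (g^li, - g^lj N^b_j), the trace term becomes 1/2 g^li (2 tr Gamma_i + 2 tr Gamma_i).  The vertical
  derivatives of that row add up to - g^lj tr Gamma_j, and both sides come out as
  - d_i g^li - g^li tr Gamma_i.
*)

section \<open>Matrix algebra\<close>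

lemma mat_1_nth: "(mat 1 :: real^'n^'n) $ i $ j = (if i = j then 1 else 0)"
  by (simp add: mat_def)

lemma matrix_add_rdistrib: "((A::real^'m::finite^'n) + B) ** (C::real^'k^'m) = A ** C + B ** C"
  by (simp add: matrix_matrix_mult_def vec_eq_iff sum.distrib distrib_right)

lemma matrix_diff_ldistrib: "(A::real^'m::finite^'n) ** (B - C) = A ** B - A ** C"
  by (simp add: matrix_matrix_mult_def vec_eq_iff sum_subtractf right_diff_distrib)

lemma transpose_zero[simp]: "transpose (0::real^'a::finite^'b::finite) = 0"
  by (simp add: transpose_def vec_eq_iff)

lemma transpose_add: "transpose ((A::real^'a::finite^'b::finite) + B) = transpose A + transpose B"
  by (simp add: transpose_def vec_eq_iff)

lemma trace_transpose: "trace (transpose A) = trace (A::real^'k::finite^'k)"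
  unfolding trace_def transpose_def by simp

lemma trace_mul_eq: "trace ((A::real^'n::finite^'n) ** M) = (\<Sum>i\<in>UNIV. \<Sum>k\<in>UNIV. A $ i $ k * M $ k $ i)"
  unfolding trace_def matrix_matrix_mult_def by simp

lemma trace_mult_sum: "trace ((A::real^'n::finite^'n) ** (\<Sum>b\<in>UNIV. c b *\<^sub>R C b)) = (\<Sum>b\<in>UNIV. c b * trace (A ** C b))"
proof -
  have "trace (A ** (\<Sum>b\<in>UNIV. c b *\<^sub>R C b)) = (\<Sum>i\<in>UNIV. \<Sum>k\<in>UNIV. \<Sum>b\<in>UNIV. c b * (A $ i $ k * C b $ k $ i))"
    unfolding trace_mul_eq by (simp add: sum_distrib_left mult.left_commute)
  also have "\<dots> = (\<Sum>i\<in>UNIV. \<Sum>b\<in>UNIV. \<Sum>k\<in>UNIV. c b * (A $ i $ k * C b $ k $ i))"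
    by (rule sum.cong[OF refl], rule sum.swap)
  also have "\<dots> = (\<Sum>b\<in>UNIV. \<Sum>i\<in>UNIV. \<Sum>k\<in>UNIV. c b * (A $ i $ k * C b $ k $ i))"
    by (rule sum.swap)
  also have "\<dots> = (\<Sum>b\<in>UNIV. c b * trace (A ** C b))"
    unfolding trace_mul_eq by (simp add: sum_distrib_left)
  finally show ?thesis .
qed

lemma mulv_axis: "M *v axis a 1 = (\<chi> c. M $ c $ a)"
  unfolding matrix_vector_mult_def axis_def vec_eq_iff
  by (simp add: if_distrib[of "\<lambda>x. _ * x"] cong: if_cong)

lemma sum_axis: "(\<Sum>b\<in>UNIV. c b *\<^sub>R ((A::real^'n::finite^'m) *v axis b 1)) = A *v (\<chi> b. c b)"
  unfolding mulv_axis vec_eq_iff by (simp add: matrix_vector_mult_def mult.commute)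

lemma scaleR_mat_mulv: "(c *\<^sub>R (A::real^'n::finite^'m)) *v v = c *\<^sub>R (A *v v)"
  unfolding matrix_vector_mult_def vec_eq_iff by (simp add: real_scaleR_def sum_distrib_left mult.assoc)

lemma congruence_entry: "(transpose M ** N ** M) $ a $ b = (M *v axis a 1) \<bullet> (N *v (M *v axis b 1))"
proof -
  have "(transpose M ** N ** M) $ a $ b = (\<Sum>k\<in>UNIV. (\<Sum>n\<in>UNIV. M $ n $ a * N $ n $ k) * M $ k $ b)"
    by (simp add: matrix_matrix_mult_def transpose_def)
  also have "\<dots> = (\<Sum>k\<in>UNIV. \<Sum>n\<in>UNIV. M $ n $ a * (N $ n $ k * M $ k $ b))"
    by (simp add: sum_distrib_right mult.assoc)
  also have "\<dots> = (\<Sum>n\<in>UNIV. \<Sum>k\<in>UNIV. M $ n $ a * (N $ n $ k * M $ k $ b))"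
    by (rule sum.swap)
  also have "\<dots> = (M *v axis a 1) \<bullet> (N *v (M *v axis b 1))"
    unfolding mulv_axis by (simp add: matrix_vector_mult_def inner_vec_def sum_distrib_left)
  finally show ?thesis .
qed

definition outer :: "real^'r \<Rightarrow> real^'c \<Rightarrow> real^'c^'r" where
  "outer u v = (\<chi> a b. u $ a * v $ b)"

lemma outer_mulv: "outer u v *v x = (v \<bullet> x) *\<^sub>R u"
  unfolding outer_def matrix_vector_mult_def inner_vec_def vec_eq_iff
  by (simp add: sum_distrib_left mult.commute mult.left_commute)

lemma outer_sum_left: "outer (\<Sum>b\<in>S. c b *\<^sub>R u b) v = (\<Sum>b\<in>S. c b *\<^sub>R outer (u b) v)"
  unfolding outer_def vec_eq_iff by (simp add: sum_distrib_right mult.assoc)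

lemma outer_sum_right: "outer v (\<Sum>b\<in>S. c b *\<^sub>R u b) = (\<Sum>b\<in>S. c b *\<^sub>R outer v (u b))"
  unfolding outer_def vec_eq_iff by (simp add: sum_distrib_left mult.left_commute)

lemma outer_diff_left: "outer (u - u') v = outer u v - outer u' v"
  unfolding outer_def vec_eq_iff by (simp add: left_diff_distrib)

lemma outer_diff_right: "outer v (u - u') = outer v u - outer v u'"
  unfolding outer_def vec_eq_iff by (simp add: right_diff_distrib)

lemma outer_mulv_left: "outer (A *v u) v = A ** outer u v"
  unfolding outer_def vec_eq_iff by (simp add: matrix_matrix_mult_def matrix_vector_mult_def sum_distrib_right mult.assoc)

lemma outer_mulv_right: "outer u ((A::real^'n::finite^'m) *v v) = outer u v ** transpose A"
  unfolding outer_def vec_eq_iff by (simp add: matrix_matrix_mult_def matrix_vector_mult_def transpose_def sum_distrib_left mult_ac)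

lemma transpose_outer: "transpose (outer w w) = outer w w"
  by (simp add: transpose_def outer_def vec_eq_iff mult.commute)

lemma matrix_inv_unique:
  fixes A B :: "real^'n::finite^'n"
  assumes "A ** B = mat 1"
  shows "matrix_inv A = B"
proof -
  have BA: "B ** A = mat 1" using assms matrix_left_right_inverse by blast
  have ex: "\<exists>A'. A ** A' = mat 1 \<and> A' ** A = mat 1" using assms BA by blast
  define C where "C = matrix_inv A"
  have C: "A ** C = mat 1 \<and> C ** A = mat 1"
    unfolding C_def matrix_inv_def using someI_ex[OF ex] by blast
  have "C = C ** (A ** B)" using assms by simp
  also have "\<dots> = (C ** A) ** B" by (simp add: matrix_mul_assoc)
  also have "\<dots> = B" using C by simp
  finally show ?thesis unfolding C_def .
qed

lemma posdef_matrix_inv: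
  fixes A :: "real^'n::finite^'n"
  assumes "\<forall>v. v \<noteq> 0 \<longrightarrow> v \<bullet> (A *v v) > 0"
  shows "A ** matrix_inv A = mat 1"
proof -
  have "inj ((*v) A)"
  proof (rule injI)
    fix u v assume "A *v u = A *v v"
    then have "A *v (u - v) = 0" by (simp add: matrix_vector_mult_diff_distrib)
    then have "\<not> (u - v \<noteq> 0)" using assms by (metis inner_zero_right less_irrefl)
    then show "u = v" by simp
  qed
  then have "det A \<noteq> 0" using det_nz_iff_inj[of "(*v) A"] by (simp add: matrix_vector_mul_linear)
  then have "invertible A" using invertible_det_nz by blast
  then obtain B where "A ** B = mat 1" unfolding invertible_def by blast
  then show ?thesis using matrix_inv_unique by metis
qed

lemma symmetric_matrix_inv:
  fixes A :: "real^'n::finite^'n"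
  assumes "A ** matrix_inv A = mat 1" "transpose A = A"
  shows "transpose (matrix_inv A) = matrix_inv A"
proof -
  have "matrix_inv A ** A = mat 1" using assms(1) matrix_left_right_inverse by blast
  then have "transpose (matrix_inv A ** A) = mat 1" by (simp add: transpose_mat)
  then have "A ** transpose (matrix_inv A) = mat 1" using assms(2) by (simp add: matrix_transpose_mul)
  then show ?thesis using matrix_inv_unique by metis
qed

lemma matrix_inv_cramer:
  fixes A :: "real^'n::finite^'n"
  assumes "A ** matrix_inv A = mat 1"
  shows "matrix_inv A $ i $ j = det (\<chi> r s. if s = i then (if r = j then 1 else 0) else A$r$s) / det A"
proof -
  have "invertible A" using assms unfolding invertible_def using matrix_left_right_inverse by blast
  then have d: "det A \<noteq> 0" using invertible_det_nz by blast
  define x where "x = (\<chi> k. matrix_inv A $ k $ j)"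
  define b :: "real^'n" where "b = (\<chi> r. if r = j then 1 else 0)"
  have bj: "b $ r = (if r = j then 1 else 0)" for r unfolding b_def by simp
  have "A *v x = b"
  proof -
    have "(A *v x) $ r = (A ** matrix_inv A) $ r $ j" for r
      by (simp add: x_def matrix_vector_mult_def matrix_matrix_mult_def)
    then show ?thesis using assms by (simp add: vec_eq_iff bj mat_1_nth)
  qed
  then have "x = (\<chi> k. det(\<chi> r s. if s=k then b$r else A$r$s) / det A)" using cramer[OF d] by blast
  then have "x $ i = det(\<chi> r s. if s=i then b$r else A$r$s) / det A" by simp
  moreover have "(\<chi> r s. if s=i then b$r else A$r$s) = (\<chi> r s. if s = i then (if r = j then 1 else 0) else A$r$s)"
    apply (rule arg_cong[where f=vec_lambda], rule ext)
    apply (rule arg_cong[where f=vec_lambda], rule ext)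
    apply (simp add: bj)
    done
  ultimately show ?thesis by (simp add: x_def)
qed

lemma trace_inverse_compat:
  fixes A Ai T :: "real^'k::finite^'k"
  assumes "A ** Ai = mat 1" "Ai ** A = mat 1"
  shows "trace (Ai ** (transpose T ** A + A ** T)) = 2 * trace T"
proof -
  have "trace (Ai ** (transpose T ** A)) = trace ((transpose T ** A) ** Ai)" by (rule trace_mul_sym)
  also have "\<dots> = trace (transpose T ** (A ** Ai))" by (simp add: matrix_mul_assoc)
  also have "\<dots> = trace T" using assms(1) by (simp add: trace_transpose)
  finally have 1: "trace (Ai ** (transpose T ** A)) = trace T" .
  have 2: "trace (Ai ** (A ** T)) = trace T" by (simp add: matrix_mul_assoc assms(2))
  show ?thesis using 1 2 by (simp add: matrix_add_ldistrib trace_add)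
qed

lemma sum_UNIV_Plus: "(\<Sum>a\<in>(UNIV::('a::finite+'b::finite) set). f a) = (\<Sum>i\<in>UNIV. f (Inl i)) + (\<Sum>j\<in>UNIV. f (Inr j))"
  by (subst UNIV_Plus_UNIV[symmetric], subst sum.Plus) (auto simp: o_def)

definition block_mat :: "real^'n^'n \<Rightarrow> real^'n^'n \<Rightarrow> real^'n^'n \<Rightarrow> real^'n^'n \<Rightarrow> real^('n::finite+'n)^('n+'n)" where
  "block_mat A B C D = (\<chi> a b. case a of Inl i \<Rightarrow> (case b of Inl j \<Rightarrow> A$i$j | Inr j \<Rightarrow> B$i$j)
                                    | Inr i \<Rightarrow> (case b of Inl j \<Rightarrow> C$i$j | Inr j \<Rightarrow> D$i$j))"

lemma block_mat_nth[simp]: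
  "block_mat A B C D $ Inl i $ Inl j = A$i$j" "block_mat A B C D $ Inl i $ Inr j = B$i$j"
  "block_mat A B C D $ Inr i $ Inl j = C$i$j" "block_mat A B C D $ Inr i $ Inr j = D$i$j"
  unfolding block_mat_def by simp_all

lemma block_mat_eq_iff: "M = block_mat A B C D \<longleftrightarrow>
    (\<forall>i j. M$Inl i$Inl j = A$i$j \<and> M$Inl i$Inr j = B$i$j \<and> M$Inr i$Inl j = C$i$j \<and> M$Inr i$Inr j = D$i$j)"
  unfolding vec_eq_iff by (auto simp: block_mat_def split: sum.splits)

lemma block_mat_mult: "block_mat A B C D ** block_mat A' B' C' D' = block_mat (A**A' + B**C') (A**B' + B**D') (C**A' + D**C') (C**B' + D**D')"
  unfolding block_mat_eq_iff by (simp add: matrix_matrix_mult_def sum_UNIV_Plus)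

lemma block_mat_transpose: "transpose (block_mat A B C D) = block_mat (transpose A) (transpose C) (transpose B) (transpose D)"
  unfolding block_mat_eq_iff by (simp add: transpose_def)

lemma trace_block_mat: "trace (block_mat A B C D) = trace A + trace D"
  unfolding trace_def by (simp add: sum_UNIV_Plus)

lemma mat_1_block_mat: "mat 1 = block_mat (mat 1) 0 0 (mat 1)"
  unfolding block_mat_eq_iff by (simp add: mat_def)

lemma congruence_inverse:
  assumes "D ** Di = mat 1" "P ** Q = mat 1" "Q ** P = mat 1"
  shows "(transpose P ** D ** P) ** (Q ** Di ** transpose Q) = (mat 1 :: real^'k::finite^'k)"
proof -
  have "(transpose P ** D ** P) ** (Q ** Di ** transpose Q) = transpose P ** D ** (P ** Q) ** Di ** transpose Q"
    by (simp add: matrix_mul_assoc)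
  also have "\<dots> = transpose P ** D ** Di ** transpose Q" by (simp only: assms(2) matrix_mul_rid)
  also have "\<dots> = transpose P ** (D ** Di) ** transpose Q" by (simp add: matrix_mul_assoc)
  also have "\<dots> = transpose P ** transpose Q" using assms by simp
  also have "\<dots> = transpose (Q ** P)" by (rule matrix_transpose_mul[symmetric])
  also have "\<dots> = mat 1" by (simp only: assms(3) transpose_mat)
  finally show ?thesis .
qed

(* The logarithmic derivative of det (P^T D P) when det P is constant. *)
lemma trace_congruence_derivative:
  fixes P Q D Di dP dD :: "real^'k::finite^'k"
  assumes "P ** Q = mat 1" "Q ** P = mat 1" "Di ** D = mat 1" "trace (Q ** dP) = 0"
  shows "trace ((Q ** Di ** transpose Q) ** ((transpose dP ** D + transpose P ** dD) ** P + (transpose P ** D) ** dP))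
    = trace (Di ** dD)"
proof -
  have tP: "transpose Q ** transpose P = mat 1"
    by (simp only: matrix_transpose_mul[symmetric] assms(1) transpose_mat)
  have T1: "trace ((Q ** Di ** transpose Q) ** (transpose dP ** D ** P)) = 0"
  proof -
    have "trace ((Q ** Di ** transpose Q) ** (transpose dP ** D ** P)) = trace ((Q ** Di ** transpose Q ** transpose dP) ** (D ** P))"
      by (simp add: matrix_mul_assoc)
    also have "\<dots> = trace ((D ** P) ** (Q ** Di ** transpose Q ** transpose dP))"
      by (rule trace_mul_sym)
    also have "\<dots> = trace ((D ** (P ** Q) ** Di) ** transpose Q ** transpose dP)"
      by (simp add: matrix_mul_assoc)
    also have "\<dots> = trace ((D ** Di) ** transpose Q ** transpose dP)" by (simp only: assms(1) matrix_mul_rid)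
    also have "\<dots> = trace (transpose Q ** transpose dP)"
    proof -
      have "D ** Di = mat 1" using assms(3) matrix_left_right_inverse by blast
      then show ?thesis by simp
    qed
    also have "\<dots> = trace (transpose (dP ** Q))" by (simp add: matrix_transpose_mul)
    also have "\<dots> = trace (Q ** dP)" by (simp only: trace_transpose) (rule trace_mul_sym)
    finally show ?thesis using assms by simp
  qed
  have T2: "trace ((Q ** Di ** transpose Q) ** (transpose P ** dD ** P)) = trace (Di ** dD)"
  proof -
    have "trace ((Q ** Di ** transpose Q) ** (transpose P ** dD ** P)) = trace (Q ** Di ** (transpose Q ** transpose P) ** dD ** P)"
      by (simp add: matrix_mul_assoc)
    also have "\<dots> = trace (Q ** Di ** mat 1 ** dD ** P)" by (simp only: tP)
    also have "\<dots> = trace (Q ** (Di ** dD ** P))" by (simp add: matrix_mul_assoc)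
    also have "\<dots> = trace ((Di ** dD ** P) ** Q)" by (rule trace_mul_sym)
    also have "\<dots> = trace (Di ** dD ** (P ** Q))" by (simp add: matrix_mul_assoc)
    also have "\<dots> = trace (Di ** dD)" by (simp only: assms(1) matrix_mul_rid)
    finally show ?thesis .
  qed
  have T3: "trace ((Q ** Di ** transpose Q) ** (transpose P ** D ** dP)) = 0"
  proof -
    have "trace ((Q ** Di ** transpose Q) ** (transpose P ** D ** dP)) = trace (Q ** Di ** (transpose Q ** transpose P) ** D ** dP)"
      by (simp add: matrix_mul_assoc)
    also have "\<dots> = trace (Q ** Di ** mat 1 ** D ** dP)" by (simp only: tP)
    also have "\<dots> = trace (Q ** (Di ** D) ** dP)" by (simp add: matrix_mul_assoc)
    also have "\<dots> = trace (Q ** dP)" by (simp only: assms(3) matrix_mul_rid)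
    finally show ?thesis using assms by simp
  qed
  show ?thesis using T1 T2 T3
    by (simp add: matrix_add_ldistrib matrix_add_rdistrib trace_add)
qed

section \<open>Partial derivatives\<close>

(* pd is defined via deriv and is junk where no derivative exists; has_pd records existence
   together with the value. *)
definition has_pd :: "'i::finite \<Rightarrow> (real^'i \<Rightarrow> real) \<Rightarrow> real^'i \<Rightarrow> real \<Rightarrow> bool" where
  "has_pd i f x D \<longleftrightarrow> ((\<lambda>t. f (x + t *\<^sub>R axis i 1)) has_real_derivative D) (at 0)"

lemma has_pd_imp_pd: "has_pd i f x D \<Longrightarrow> pd i f x = D"
  unfolding has_pd_def pd_def by (rule DERIV_imp_deriv)

lemma has_pd_pd: "has_pd i f x D \<Longrightarrow> has_pd i f x (pd i f x)"
  using has_pd_imp_pd by metis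

lemma has_pd_const[simp]: "has_pd i (\<lambda>z. c) x 0"
  unfolding has_pd_def by simp

lemma has_pd_add: "has_pd i f x D \<Longrightarrow> has_pd i g x E \<Longrightarrow> has_pd i (\<lambda>z. f z + g z) x (D + E)"
  unfolding has_pd_def by (rule DERIV_add)

lemma has_pd_diff: "has_pd i f x D \<Longrightarrow> has_pd i g x E \<Longrightarrow> has_pd i (\<lambda>z. f z - g z) x (D - E)"
  unfolding has_pd_def by (rule DERIV_diff)

lemma has_pd_minus: "has_pd i f x D \<Longrightarrow> has_pd i (\<lambda>z. - f z) x (- D)"
  unfolding has_pd_def by (rule DERIV_minus)

lemma has_pd_mult: "has_pd i f x D \<Longrightarrow> has_pd i g x E \<Longrightarrow> has_pd i (\<lambda>z. f z * g z) x (D * g x + f x * E)"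
  unfolding has_pd_def by (drule (1) DERIV_mult) (simp add: mult.commute)

lemma has_pd_cmult: "has_pd i f x D \<Longrightarrow> has_pd i (\<lambda>z. c * f z) x (c * D)"
  unfolding has_pd_def by (rule DERIV_cmult)

lemma has_pd_sum: "finite A \<Longrightarrow> (\<And>k. k \<in> A \<Longrightarrow> has_pd i (f k) x (D k))
    \<Longrightarrow> has_pd i (\<lambda>z. \<Sum>k\<in>A. f k z) x (\<Sum>k\<in>A. D k)"
  unfolding has_pd_def by (rule DERIV_sum)

lemma has_pd_unique: "has_pd i f x D \<Longrightarrow> has_pd i f x E \<Longrightarrow> D = E"
  using has_pd_imp_pd by metis

lemma has_pd_transform_open:
  assumes "open S" "x \<in> S" "\<And>z. z \<in> S \<Longrightarrow> f z = g z" "has_pd i f x D"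
  shows "has_pd i g x D"
proof -
  let ?T = "(\<lambda>t::real. x + t *\<^sub>R axis i 1) -` S"
  have "open ?T" by (intro open_vimage assms(1) continuous_intros)
  have "0 \<in> ?T" using assms(2) by simp
  show ?thesis using assms(4) unfolding has_pd_def
    by (rule has_field_derivative_transform_within_open[OF _ \<open>open ?T\<close> \<open>0 \<in> ?T\<close>]) (simp add: assms(3))
qed

lemma differentiable_imp_has_pd:
  assumes "f differentiable (at x)"
  shows "has_pd i f x (pd i f x)"
proof -
  have "(\<lambda>t::real. x + t *\<^sub>R axis i 1) differentiable (at 0)"
    by (intro derivative_intros)
  then have "(f \<circ> (\<lambda>t::real. x + t *\<^sub>R axis i 1)) differentiable (at 0)"
    using assms by (intro differentiable_chain_at) auto
  then have "DERIV (f \<circ> (\<lambda>t::real. x + t *\<^sub>R axis i 1)) 0 :> deriv (f \<circ> (\<lambda>t::real. x + t *\<^sub>R axis i 1)) 0"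
    using DERIV_deriv_iff_real_differentiable by blast
  then show ?thesis unfolding has_pd_def pd_def by (simp add: o_def)
qed

lemma has_pd_locally_const:
  assumes "open S" "x \<in> S" "\<And>z. z \<in> S \<Longrightarrow> f z = c"
  shows "has_pd i f x 0"
  using has_pd_transform_open[OF assms(1,2), of "\<lambda>z. c" f] assms(3) by auto

definition has_pd_mat :: "'i::finite \<Rightarrow> (real^'i \<Rightarrow> real^'c^'r) \<Rightarrow> real^'i \<Rightarrow> real^'c^'r \<Rightarrow> bool" where
  "has_pd_mat i F x F' \<longleftrightarrow> (\<forall>a b. has_pd i (\<lambda>z. F z $ a $ b) x (F' $ a $ b))"

definition has_pd_vec :: "'i::finite \<Rightarrow> (real^'i \<Rightarrow> real^'r) \<Rightarrow> real^'i \<Rightarrow> real^'r \<Rightarrow> bool" where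
  "has_pd_vec i v x v' \<longleftrightarrow> (\<forall>a. has_pd i (\<lambda>z. v z $ a) x (v' $ a))"

definition pd_mat :: "'i::finite \<Rightarrow> (real^'i \<Rightarrow> real^'c^'r) \<Rightarrow> real^'i \<Rightarrow> real^'c^'r" where
  "pd_mat i F x = (\<chi> a b. pd i (\<lambda>z. F z $ a $ b) x)"

lemma has_pd_mat_mult:
  fixes F :: "real^'i::finite \<Rightarrow> real^'m::finite^'r" and H :: "real^'i \<Rightarrow> real^'c^'m"
  assumes "has_pd_mat i F x F'" "has_pd_mat i H x H'"
  shows "has_pd_mat i (\<lambda>z. F z ** H z) x (F' ** H x + F x ** H')"
  unfolding has_pd_mat_def matrix_matrix_mult_def
proof (intro allI)
  fix a b
  have "has_pd i (\<lambda>z. \<Sum>k\<in>UNIV. F z $ a $ k * H z $ k $ b) x (\<Sum>k\<in>UNIV. F' $ a $ k * H x $ k $ b + F x $ a $ k * H' $ k $ b)"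
    using assms unfolding has_pd_mat_def by (intro has_pd_sum has_pd_mult) auto
  then show "has_pd i (\<lambda>z. (\<chi> i j. \<Sum>k\<in>UNIV. F z $ i $ k * H z $ k $ j) $ a $ b) x
      (((\<chi> i j. \<Sum>k\<in>UNIV. F' $ i $ k * H x $ k $ j) + (\<chi> i j. \<Sum>k\<in>UNIV. F x $ i $ k * H' $ k $ j)) $ a $ b)"
    by (simp add: sum.distrib)
qed

lemma has_pd_mat_add: "has_pd_mat i F x F' \<Longrightarrow> has_pd_mat i H x H' \<Longrightarrow> has_pd_mat i (\<lambda>z. F z + H z) x (F' + H')"
  unfolding has_pd_mat_def by (auto intro: has_pd_add)

lemma has_pd_mat_scaleR: "has_pd_mat i F x F' \<Longrightarrow> has_pd_mat i (\<lambda>z. c *\<^sub>R F z) x (c *\<^sub>R F')"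
  unfolding has_pd_mat_def by (auto intro: has_pd_cmult)

lemma has_pd_mat_const: "has_pd_mat i (\<lambda>z. C) x 0"
  unfolding has_pd_mat_def by auto

lemma has_pd_mat_transpose: "has_pd_mat i F x F' \<Longrightarrow> has_pd_mat i (\<lambda>z. transpose (F z)) x (transpose F')"
  unfolding has_pd_mat_def transpose_def by auto

lemma has_pd_mat_imp_pd: "has_pd_mat i F x F' \<Longrightarrow> pd i (\<lambda>z. F z $ a $ b) x = F' $ a $ b"
  unfolding has_pd_mat_def by (auto intro: has_pd_imp_pd)

lemma has_pd_mat_vec_mult:
  fixes F :: "real^'i::finite \<Rightarrow> real^'m::finite^'r"
  assumes "has_pd_mat i F x F'" "has_pd_vec i v x v'"
  shows "has_pd_vec i (\<lambda>z. F z *v v z) x (F' *v v x + F x *v v')"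
  unfolding has_pd_vec_def matrix_vector_mult_def
proof (intro allI)
  fix a
  have "has_pd i (\<lambda>z. \<Sum>k\<in>UNIV. F z $ a $ k * v z $ k) x (\<Sum>k\<in>UNIV. F' $ a $ k * v x $ k + F x $ a $ k * v' $ k)"
    using assms unfolding has_pd_mat_def has_pd_vec_def by (intro has_pd_sum has_pd_mult) auto
  then show "has_pd i (\<lambda>z. (\<chi> j. \<Sum>k\<in>UNIV. F z $ j $ k * v z $ k) $ a) x
     (((\<chi> j. \<Sum>k\<in>UNIV. F' $ j $ k * v x $ k) + (\<chi> j. \<Sum>k\<in>UNIV. F x $ j $ k * v' $ k)) $ a)"
    by (simp add: sum.distrib)
qed

lemma has_pd_mat_outer:
  assumes "has_pd_vec i u x u'" "has_pd_vec i v x v'"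
  shows "has_pd_mat i (\<lambda>z. outer (u z) (v z)) x (outer u' (v x) + outer (u x) v')"
  using assms unfolding has_pd_mat_def has_pd_vec_def outer_def by (auto intro: has_pd_mult)

lemma has_pd_mat_block_mat: "has_pd_mat i A x A' \<Longrightarrow> has_pd_mat i B x B' \<Longrightarrow>
    has_pd_mat i C x C' \<Longrightarrow> has_pd_mat i D x D' \<Longrightarrow>
   has_pd_mat i (\<lambda>z. block_mat (A z) (B z) (C z) (D z)) x (block_mat A' B' C' D')"
  unfolding has_pd_mat_def by (auto simp: block_mat_def split: sum.splits)

lemma differentiable_imp_has_pd_entries:
  assumes "\<And>r c. (\<lambda>z. F z $ r $ c) differentiable (at x)"
  shows "\<And>i r c. has_pd i (\<lambda>z. F z $ r $ c) x (pd_mat i F x $ r $ c)"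
  unfolding pd_mat_def using assms by (simp add: differentiable_imp_has_pd)

lemma has_pd_mat_pd_mat: "(\<And>r c. \<exists>D. has_pd a (\<lambda>z. F z $ r $ c) p D) \<Longrightarrow> has_pd_mat a F p (pd_mat a F p)"
  unfolding has_pd_mat_def pd_mat_def using has_pd_pd by fastforce

lemma differentiable_prod_at:
  fixes f :: "'i \<Rightarrow> 'a::real_normed_vector \<Rightarrow> real"
  shows "finite I \<Longrightarrow> (\<And>i. i \<in> I \<Longrightarrow> f i differentiable (at x)) \<Longrightarrow>
    (\<lambda>z. \<Prod>i\<in>I. f i z) differentiable (at x)"
proof (induction I rule: finite_induct)
  case empty then show ?case by simp
next
  case (insert a F)
  then show ?case by (simp add: differentiable_mult)
qed

lemma differentiable_det:
  fixes M :: "real^'n::finite \<Rightarrow> real^'m::finite^'m"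
  assumes "\<And>a b. (\<lambda>z. M z $ a $ b) differentiable (at x)"
  shows "(\<lambda>z. det (M z)) differentiable (at x)"
proof -
  have P: "(\<lambda>z. \<Prod>i\<in>UNIV. M z $ i $ p i) differentiable (at x)" for p :: "'m \<Rightarrow> 'm"
    by (rule differentiable_prod_at[where f="\<lambda>i z. M z $ i $ p i"]) (auto intro: assms)
  show ?thesis unfolding det_def by (intro differentiable_sum ballI differentiable_mult differentiable_const P finite_permutations finite)
qed

section \<open>Riemannian metrics in coordinates\<close>

lemma smooth_on_differentiable: "smooth_on U f \<Longrightarrow> open U \<Longrightarrow> x \<in> U \<Longrightarrow> f differentiable (at x)"
proof -
  assume "smooth_on U f" "open U" "x \<in> U"
  then have "(foldr pd [] f) differentiable_on U" unfolding smooth_on_def by blast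
  then show ?thesis using \<open>open U\<close> \<open>x \<in> U\<close> differentiable_on_eq_differentiable_at by auto
qed

lemma riem_metric_differentiable:
  assumes "riem_metric U G" "open U" "x \<in> U"
  shows "(\<lambda>z. G z $ a $ b) differentiable (at x)"
    and "(\<lambda>z. pd k (\<lambda>w. G w $ a $ b) z) differentiable (at x)"
proof -
  have s: "smooth_on U (\<lambda>z. G z $ a $ b)" using assms(1) unfolding riem_metric_def by blast
  have "(foldr pd [] (\<lambda>z. G z $ a $ b)) differentiable_on U" using s unfolding smooth_on_def by blast
  then show "(\<lambda>z. G z $ a $ b) differentiable (at x)" using assms(2,3) differentiable_on_eq_differentiable_at by auto
  have "(foldr pd [k] (\<lambda>z. G z $ a $ b)) differentiable_on U" using s unfolding smooth_on_def by blast
  then have "(pd k (\<lambda>z. G z $ a $ b)) differentiable (at x)" using assms(2,3) differentiable_on_eq_differentiable_at by auto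
  then show "(\<lambda>z. pd k (\<lambda>w. G w $ a $ b) z) differentiable (at x)" by (simp add: eta_contract_eq)
qed

lemma riem_metric_inverse:
  assumes "riem_metric U G" "x \<in> U"
  shows "G x ** matrix_inv (G x) = mat 1" "matrix_inv (G x) ** G x = mat 1"
    "transpose (matrix_inv (G x)) = matrix_inv (G x)"
proof -
  show 1: "G x ** matrix_inv (G x) = mat 1" using assms unfolding riem_metric_def by (intro posdef_matrix_inv) auto
  then show "matrix_inv (G x) ** G x = mat 1" using matrix_left_right_inverse by blast
  show "transpose (matrix_inv (G x)) = matrix_inv (G x)" using 1 assms unfolding riem_metric_def
    by (intro symmetric_matrix_inv) auto
qed

lemma riem_metric_sym: "riem_metric U G \<Longrightarrow> x \<in> U \<Longrightarrow> G x $ a $ b = G x $ b $ a"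
proof -
  assume "riem_metric U G" "x \<in> U"
  then have "transpose (G x) $ b $ a = G x $ b $ a" unfolding riem_metric_def by simp
  then show ?thesis unfolding transpose_def by simp
qed

lemma pd_metric_sym:
  assumes "riem_metric U G" "open U" "x \<in> U"
  shows "pd k (\<lambda>z. G z $ a $ b) x = pd k (\<lambda>z. G z $ b $ a) x"
proof -
  have h: "has_pd k (\<lambda>z. G z $ a $ b) x (pd k (\<lambda>z. G z $ a $ b) x)"
    by (rule differentiable_imp_has_pd, rule riem_metric_differentiable(1)[OF assms])
  have "has_pd k (\<lambda>z. G z $ b $ a) x (pd k (\<lambda>z. G z $ a $ b) x)"
    by (rule has_pd_transform_open[OF assms(2,3) _ h]) (simp add: riem_metric_sym[OF assms(1)])
  then show ?thesis using has_pd_imp_pd by metis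
qed

lemma has_pd_metric_inverse:
  assumes "riem_metric U G" "open U" "x \<in> U"
  shows "has_pd k (\<lambda>z. matrix_inv (G z) $ a $ b) x (pd k (\<lambda>z. matrix_inv (G z) $ a $ b) x)"
proof -
  define C where "C z = det (\<chi> r s. if s = a then (if r = b then 1 else 0) else G z$r$s) / det (G z)" for z
  have eq: "matrix_inv (G z) $ a $ b = C z" if "z \<in> U" for z
    unfolding C_def using riem_metric_inverse(1)[OF assms(1) that] by (rule matrix_inv_cramer)
  have dx: "det (G x) \<noteq> 0"
    using riem_metric_inverse(1)[OF assms(1,3)] invertible_det_nz unfolding invertible_def
    using matrix_left_right_inverse by blast
  have "C differentiable (at x)" unfolding C_def
  proof (intro differentiable_divide differentiable_det dx)
    fix r s
    show "(\<lambda>z. (\<chi> r s. if s = a then (if r = b then 1 else 0) else G z$r$s) $ r $ s) differentiable (at x)"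
      using riem_metric_differentiable(1)[OF assms] by (cases "s = a") auto
    show "(\<lambda>z. G z $ r $ s) differentiable (at x)" using riem_metric_differentiable(1)[OF assms] .
  qed
  then have h1: "has_pd k C x (pd k C x)" by (rule differentiable_imp_has_pd)
  have "has_pd k (\<lambda>z. matrix_inv (G z) $ a $ b) x (pd k C x)"
    by (rule has_pd_transform_open[OF assms(2,3) _ h1]) (simp add: eq)
  then show ?thesis by (rule has_pd_pd)
qed

lemma has_pd_christoffel:
  assumes "riem_metric U G" "open U" "x \<in> U"
  shows "has_pd k (\<lambda>z. christoffel G z m i j) x (pd k (\<lambda>z. christoffel G z m i j) x)"
proof -
  have "has_pd k (\<lambda>z. christoffel G z m i j) x
     ((1/2) * (\<Sum>n\<in>UNIV. pd k (\<lambda>z. matrix_inv (G z) $ m $ n) x *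
      (pd i (\<lambda>z. G z $ n $ j) x + pd j (\<lambda>z. G z $ n $ i) x - pd n (\<lambda>z. G z $ i $ j) x)
      + matrix_inv (G x) $ m $ n * (pd k (\<lambda>z. pd i (\<lambda>w. G w $ n $ j) z) x
         + pd k (\<lambda>z. pd j (\<lambda>w. G w $ n $ i) z) x - pd k (\<lambda>z. pd n (\<lambda>w. G w $ i $ j) z) x)))"
    unfolding christoffel_def
    by (intro has_pd_cmult has_pd_sum has_pd_mult has_pd_add has_pd_diff
       has_pd_metric_inverse[OF assms] differentiable_imp_has_pd riem_metric_differentiable[OF assms]) auto
  then show ?thesis by (rule has_pd_pd)
qed

definition christoffel_mat :: "(real^'n::finite \<Rightarrow> real^'n^'n) \<Rightarrow> real^'n \<Rightarrow> 'n \<Rightarrow> real^'n^'n" where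
  "christoffel_mat G x i = (\<chi> m b. christoffel G x m i b)"

lemma trace_christoffel_mat: "trace (christoffel_mat G x j) = (\<Sum>b\<in>UNIV. christoffel G x b j b)"
  unfolding trace_def christoffel_mat_def by simp

lemma lowered_christoffel:
  assumes "riem_metric U G" "x \<in> U"
  shows "(\<Sum>m\<in>UNIV. G x $ a $ m * christoffel G x m i b) =
     (1/2) * (pd i (\<lambda>z. G z $ a $ b) x + pd b (\<lambda>z. G z $ a $ i) x - pd a (\<lambda>z. G z $ i $ b) x)"
proof -
  define gi where "gi = matrix_inv (G x)"
  have I: "G x ** gi = mat 1" unfolding gi_def using riem_metric_inverse[OF assms] by simp
  have I': "(\<Sum>m\<in>UNIV. G x $ a $ m * gi $ m $ s) = (if a = s then 1 else 0)" for s
  proof -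
    have "(\<Sum>m\<in>UNIV. G x $ a $ m * gi $ m $ s) = (G x ** gi) $ a $ s"
      by (simp only: matrix_matrix_mult_def vec_lambda_beta)
    then show ?thesis using I by (simp add: mat_1_nth)
  qed
  define F where "F s = pd i (\<lambda>z. G z $ s $ b) x + pd b (\<lambda>z. G z $ s $ i) x - pd s (\<lambda>z. G z $ i $ b) x" for s
  have "(\<Sum>m\<in>UNIV. G x $ a $ m * christoffel G x m i b) = (\<Sum>m\<in>UNIV. G x $ a $ m * ((1/2) * (\<Sum>s\<in>UNIV. gi $ m $ s * F s)))"
    unfolding christoffel_def gi_def F_def by simp
  also have "\<dots> = (1/2) * (\<Sum>m\<in>UNIV. \<Sum>s\<in>UNIV. G x $ a $ m * gi $ m $ s * F s)"
    by (simp add: sum_distrib_left mult.assoc mult.left_commute)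
  also have "\<dots> = (1/2) * (\<Sum>s\<in>UNIV. \<Sum>m\<in>UNIV. G x $ a $ m * gi $ m $ s * F s)"
    by (subst sum.swap) (rule refl)
  also have "\<dots> = (1/2) * (\<Sum>s\<in>UNIV. (\<Sum>m\<in>UNIV. G x $ a $ m * gi $ m $ s) * F s)"
    by (simp add: sum_distrib_right)
  also have "\<dots> = (1/2) * (\<Sum>s\<in>UNIV. (if a = s then 1 else 0) * F s)"
    by (simp only: I')
  also have "\<dots> = (1/2) * F a" by (simp add: if_distrib[of "\<lambda>x. x * _"] cong: if_cong)
  finally show ?thesis unfolding F_def .
qed

lemma pd_mat_metric:
  assumes "riem_metric U G" "open U" "x \<in> U"
  shows "pd_mat i G x = transpose (christoffel_mat G x i) ** G x + G x ** christoffel_mat G x i"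
proof -
  have "pd i (\<lambda>z. G z $ a $ b) x =
      (\<Sum>m\<in>UNIV. christoffel G x m i a * G x $ m $ b) + (\<Sum>m\<in>UNIV. G x $ a $ m * christoffel G x m i b)" for a b
  proof -
    have "(\<Sum>m\<in>UNIV. christoffel G x m i a * G x $ m $ b) = (\<Sum>m\<in>UNIV. G x $ b $ m * christoffel G x m i a)"
      using riem_metric_sym[OF assms(1,3)] by (simp add: mult.commute)
    then show ?thesis
      unfolding lowered_christoffel[OF assms(1,3)] using pd_metric_sym[OF assms] by (simp add: algebra_simps)
  qed
  then show ?thesis
    unfolding pd_mat_def christoffel_mat_def vec_eq_iff by (simp add: matrix_matrix_mult_def transpose_def)
qed

lemma trace_pd_mat_metric:
  assumes "riem_metric U G" "open U" "x \<in> U"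
  shows "trace (matrix_inv (G x) ** pd_mat i G x) = 2 * trace (christoffel_mat G x i)"
  unfolding pd_mat_metric[OF assms] by (rule trace_inverse_compat[OF riem_metric_inverse(1,2)[OF assms(1,3)]])

lemma pd_mat_parallel:
  assumes "\<forall>x\<in>U. \<forall>i l j. covd_phi G \<phi> x i l j = 0" "x \<in> U"
  shows "pd_mat i \<phi> x = \<phi> x ** christoffel_mat G x i - christoffel_mat G x i ** \<phi> x"
proof -
  have "pd i (\<lambda>z. \<phi> z $ l $ j) x =
      (\<Sum>m\<in>UNIV. \<phi> x $ l $ m * christoffel G x m i j) - (\<Sum>m\<in>UNIV. christoffel G x l i m * \<phi> x $ m $ j)" for l j
  proof -
    have "covd_phi G \<phi> x i l j = 0" using assms by blast
    then show ?thesis unfolding covd_phi_def by linarith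
  qed
  then show ?thesis unfolding pd_mat_def christoffel_mat_def vec_eq_iff by (simp add: matrix_matrix_mult_def)
qed

lemma matrix_mult_row: "((A::real^'m::finite^'n) ** B) $ c = A $ c v* B"
  by (simp add: vec_eq_iff matrix_matrix_mult_def vector_matrix_mult_def mult.commute)

lemma pd_matrix_inv_row:
  fixes G :: "real^'k::finite \<Rightarrow> real^'m::finite^'m"
  assumes S: "open S" "p \<in> S" "\<And>z. z \<in> S \<Longrightarrow> matrix_inv (G z) ** G z = mat 1"
    and dG: "has_pd_mat a G p dG"
    and dGi: "\<And>e. has_pd a (\<lambda>z. matrix_inv (G z) $ c $ e) p (dGi $ e)"
  shows "dGi = - ((matrix_inv (G p) ** dG ** matrix_inv (G p)) $ c)"
proof -
  define g where "g = matrix_inv (G p)"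
  have Gg: "G p ** g = mat 1" using S(2,3) matrix_left_right_inverse unfolding g_def by blast
  have D: "has_pd a (\<lambda>z. (matrix_inv (G z) ** G z) $ c $ e) p ((dGi v* G p + (g ** dG) $ c) $ e)" for e
  proof -
    have "has_pd a (\<lambda>z. \<Sum>b\<in>UNIV. matrix_inv (G z) $ c $ b * G z $ b $ e) p
        (\<Sum>b\<in>UNIV. dGi $ b * G p $ b $ e + g $ c $ b * dG $ b $ e)"
      using dG dGi unfolding has_pd_mat_def g_def by (intro has_pd_sum has_pd_mult) auto
    then show ?thesis
      by (simp add: matrix_matrix_mult_def vector_matrix_mult_def sum.distrib mult.commute)
  qed
  have Z: "has_pd a (\<lambda>z. (matrix_inv (G z) ** G z) $ c $ e) p 0" for e
    by (rule has_pd_locally_const[OF S(1,2)]) (simp add: S(3))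
  have "dGi v* G p + (g ** dG) $ c = 0"
    unfolding vec_eq_iff using has_pd_unique[OF D Z] by simp
  then have "dGi v* G p = - ((g ** dG) $ c)"
    by (simp add: eq_neg_iff_add_eq_0)
  then have "dGi = - ((g ** dG) $ c) v* g"
    using Gg by (metis vector_matrix_mul_assoc vector_matrix_mul_rid)
  then show ?thesis
    unfolding g_def by (simp add: matrix_mult_row vec_eq_iff vector_matrix_mult_def sum_negf)
qed

lemma contracted_christoffel_pd_metric:
  fixes G :: "real^'k::finite \<Rightarrow> real^'k^'k"
  assumes sym: "transpose (matrix_inv (G p)) = matrix_inv (G p)"
    and dG: "\<And>a. has_pd_mat a G p (dG a)"
  shows "(\<Sum>a\<in>UNIV. \<Sum>b\<in>UNIV. matrix_inv (G p) $ a $ b * christoffel G p c a b)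
     = (\<Sum>a\<in>UNIV. (matrix_inv (G p) ** dG a ** matrix_inv (G p)) $ c $ a)
       - (1/2) * (\<Sum>a\<in>UNIV. matrix_inv (G p) $ c $ a * trace (matrix_inv (G p) ** dG a))"
proof -
  define g where "g = matrix_inv (G p)"
  have gsym: "g $ a $ b = g $ b $ a" for a b
    using sym unfolding g_def by (metis transpose_def vec_lambda_beta)
  have pdG: "pd i (\<lambda>z. G z $ m $ j) p = dG i $ m $ j" for i m j
    using dG has_pd_mat_imp_pd by blast
  define X1 where "X1 = (\<Sum>a\<in>UNIV. \<Sum>b\<in>UNIV. \<Sum>m\<in>UNIV. g $ a $ b * (g $ c $ m * dG a $ m $ b))"
  define X2 where "X2 = (\<Sum>a\<in>UNIV. \<Sum>b\<in>UNIV. \<Sum>m\<in>UNIV. g $ a $ b * (g $ c $ m * dG b $ m $ a))"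
  define X3 where "X3 = (\<Sum>a\<in>UNIV. \<Sum>b\<in>UNIV. \<Sum>m\<in>UNIV. g $ a $ b * (g $ c $ m * dG m $ a $ b))"
  have "g $ a $ b * christoffel G p c a b = (1/2) * ((\<Sum>m\<in>UNIV. g $ a $ b * (g $ c $ m * dG a $ m $ b))
      + (\<Sum>m\<in>UNIV. g $ a $ b * (g $ c $ m * dG b $ m $ a)) - (\<Sum>m\<in>UNIV. g $ a $ b * (g $ c $ m * dG m $ a $ b)))" for a b
    unfolding christoffel_def pdG g_def[symmetric]
    by (simp add: sum_distrib_left sum.distrib sum_subtractf algebra_simps)
  then have L: "(\<Sum>a\<in>UNIV. \<Sum>b\<in>UNIV. g $ a $ b * christoffel G p c a b) = (1/2) * (X1 + X2 - X3)"
    unfolding X1_def X2_def X3_def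
    by (simp only: sum_distrib_left[symmetric] sum.distrib sum_subtractf)
  have "X2 = (\<Sum>b\<in>UNIV. \<Sum>a\<in>UNIV. \<Sum>m\<in>UNIV. g $ a $ b * (g $ c $ m * dG b $ m $ a))"
    unfolding X2_def by (rule sum.swap)
  also have "\<dots> = X1" unfolding X1_def
    by (intro sum.cong refl) (metis gsym)
  finally have X2: "X2 = X1" .
  have "X1 = (\<Sum>a\<in>UNIV. \<Sum>b\<in>UNIV. \<Sum>m\<in>UNIV. g $ c $ m * dG a $ m $ b * g $ b $ a)"
    unfolding X1_def by (intro sum.cong refl) (simp add: gsym[of a b for a b] mult.commute mult.left_commute)
  also have "\<dots> = (\<Sum>a\<in>UNIV. (g ** dG a ** g) $ c $ a)"
    by (simp add: matrix_matrix_mult_def sum_distrib_right)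
  finally have X1: "X1 = (\<Sum>a\<in>UNIV. (g ** dG a ** g) $ c $ a)" .
  have "X3 = (\<Sum>a\<in>UNIV. \<Sum>m\<in>UNIV. \<Sum>b\<in>UNIV. g $ a $ b * (g $ c $ m * dG m $ a $ b))"
    unfolding X3_def by (rule sum.cong[OF refl], rule sum.swap)
  also have "\<dots> = (\<Sum>m\<in>UNIV. \<Sum>a\<in>UNIV. \<Sum>b\<in>UNIV. g $ a $ b * (g $ c $ m * dG m $ a $ b))"
    by (rule sum.swap)
  also have "\<dots> = (\<Sum>m\<in>UNIV. g $ c $ m * (\<Sum>a\<in>UNIV. \<Sum>b\<in>UNIV. g $ a $ b * dG m $ a $ b))"
    by (simp add: sum_distrib_left algebra_simps)
  also have "\<dots> = (\<Sum>m\<in>UNIV. g $ c $ m * (\<Sum>b\<in>UNIV. \<Sum>a\<in>UNIV. g $ b $ a * dG m $ a $ b))"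
    by (subst sum.swap) (simp add: gsym)
  also have "\<dots> = (\<Sum>m\<in>UNIV. g $ c $ m * trace (g ** dG m))"
    by (simp only: trace_def matrix_matrix_mult_def vec_lambda_beta)
  finally have X3: "X3 = (\<Sum>m\<in>UNIV. g $ c $ m * trace (g ** dG m))" .
  show ?thesis using L X1 X2 X3 unfolding g_def by simp
qed

lemma contracted_christoffel_pd_inverse:
  fixes G :: "real^'k::finite \<Rightarrow> real^'k^'k"
  assumes S: "open S" "p \<in> S" "\<And>z. z \<in> S \<Longrightarrow> matrix_inv (G z) ** G z = mat 1"
    and sym: "transpose (matrix_inv (G p)) = matrix_inv (G p)"
    and dG: "\<And>a. has_pd_mat a G p (dG a)"
    and dGi: "\<And>a e. has_pd a (\<lambda>z. matrix_inv (G z) $ c $ e) p (dGi a $ e)"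
  shows "(\<Sum>a\<in>UNIV. \<Sum>b\<in>UNIV. matrix_inv (G p) $ a $ b * christoffel G p c a b)
     = - (\<Sum>a\<in>UNIV. dGi a $ a) - (1/2) * (\<Sum>a\<in>UNIV. matrix_inv (G p) $ c $ a * trace (matrix_inv (G p) ** dG a))"
proof -
  have "dGi a = - ((matrix_inv (G p) ** dG a ** matrix_inv (G p)) $ c)" for a
    by (rule pd_matrix_inv_row[OF S dG dGi])
  then show ?thesis unfolding contracted_christoffel_pd_metric[OF sym dG] by (simp add: sum_negf)
qed

lemma contracted_christoffel_metric:
  assumes R: "riem_metric U G" "open U" and xU: "x \<in> U"
  shows "(\<Sum>a\<in>UNIV. \<Sum>b\<in>UNIV. matrix_inv (G x) $ a $ b * christoffel G x l a b)
    = - (\<Sum>i\<in>UNIV. pd i (\<lambda>z. matrix_inv (G z) $ l $ i) x)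
      - (\<Sum>i\<in>UNIV. matrix_inv (G x) $ l $ i * trace (christoffel_mat G x i))"
proof -
  have dG: "has_pd_mat a G x (pd_mat a G x)" for a
    unfolding has_pd_mat_def using differentiable_imp_has_pd_entries[OF riem_metric_differentiable(1)[OF R xU]] by blast
  have dGi: "has_pd a (\<lambda>z. matrix_inv (G z) $ l $ e) x ((\<chi> e. pd a (\<lambda>z. matrix_inv (G z) $ l $ e) x) $ e)" for a e
    unfolding vec_lambda_beta by (rule has_pd_metric_inverse[OF R xU])
  have "(\<Sum>a\<in>UNIV. \<Sum>b\<in>UNIV. matrix_inv (G x) $ a $ b * christoffel G x l a b)
     = - (\<Sum>a\<in>UNIV. (\<chi> e. pd a (\<lambda>z. matrix_inv (G z) $ l $ e) x) $ a)
       - (1/2) * (\<Sum>a\<in>UNIV. matrix_inv (G x) $ l $ a * trace (matrix_inv (G x) ** pd_mat a G x))"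
    by (rule contracted_christoffel_pd_inverse[OF R(2) xU riem_metric_inverse(2)[OF R(1)] riem_metric_inverse(3)[OF R(1) xU] dG dGi])
  then show ?thesis
    unfolding trace_pd_mat_metric[OF R xU] by (simp add: sum_distrib_left mult_ac)
qed

section \<open>Induced coordinates on the tangent bundle\<close>

lemma pair_tb_nth[simp]: "pair_tb u v $ Inl i = u $ i" "pair_tb u v $ Inr i = v $ i"
  unfolding pair_tb_def by simp_all

lemma base_pair[simp]: "base (pair_tb u v) = u" "fib (pair_tb u v) = v"
  unfolding base_def fib_def by (simp_all add: vec_eq_iff)

lemma base_nth[simp]: "base p $ i = p $ Inl i" and fib_nth[simp]: "fib p $ i = p $ Inr i"
  unfolding base_def fib_def by simp_all

lemma pair_tb_eq_iff: "p = pair_tb u v \<longleftrightarrow> (\<forall>i. p $ Inl i = u $ i \<and> p $ Inr i = v $ i)"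
  unfolding vec_eq_iff by (auto simp: pair_tb_def split: sum.splits)

lemma inner_Plus: "(x::real^('n::finite+'n)) \<bullet> y = (\<Sum>i\<in>UNIV. x $ Inl i * y $ Inl i) + (\<Sum>i\<in>UNIV. x $ Inr i * y $ Inr i)"
  unfolding inner_vec_def by (simp add: sum_UNIV_Plus)

lemma inner_pair_tb: "pair_tb u v \<bullet> pair_tb u' v' = u \<bullet> u' + v \<bullet> v'"
  unfolding inner_Plus by (simp add: inner_vec_def)

lemma block_mat_mulv: "block_mat A B C D *v pair_tb u v = pair_tb (A *v u + B *v v) (C *v u + D *v v)"
  unfolding pair_tb_eq_iff by (simp add: matrix_vector_mult_def sum_UNIV_Plus)

lemma base_line: "base (p + t *\<^sub>R axis (Inl i) 1) = base p + t *\<^sub>R axis i 1"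
  "base (p + t *\<^sub>R axis (Inr j) (1::real)) = base p"
  unfolding vec_eq_iff by (simp_all add: axis_def)

lemma fib_line: "fib (p + t *\<^sub>R axis (Inl i) (1::real)) = fib p"
  "fib (p + t *\<^sub>R axis (Inr j) 1) = fib p + t *\<^sub>R axis j 1"
  unfolding vec_eq_iff by (simp_all add: axis_def)

lemma open_tb: "open U \<Longrightarrow> open (tb U)"
proof -
  assume "open U"
  have "continuous_on UNIV (base :: real^('n::finite+'n) \<Rightarrow> real^'n)"
    unfolding base_def[abs_def] by (intro continuous_intros)
  then have "open (base -` U)" using \<open>open U\<close> by (intro open_vimage) auto
  moreover have "tb U = base -` U" unfolding tb_def by auto
  ultimately show ?thesis by simp
qed

lemma pd_base_nth: "pd c (\<lambda>z. base z $ m) q = (if c = Inl m then 1 else 0)"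
proof -
  have "((\<lambda>t. q $ Inl m + t * axis c 1 $ Inl m) has_real_derivative axis c 1 $ Inl m) (at 0)"
    by (auto intro!: derivative_eq_intros)
  then have "has_pd c (\<lambda>z. base z $ m) q (axis c 1 $ Inl m)" unfolding has_pd_def by simp
  then show ?thesis by (auto dest!: has_pd_imp_pd simp: axis_def)
qed

lemma pd_pd_base_nth: "pd a (pd b (\<lambda>z. base z $ m)) q = 0"
proof -
  have e: "pd b (\<lambda>z. base z $ m) = (\<lambda>z. if b = Inl m then 1 else 0)" by (rule ext) (rule pd_base_nth)
  show ?thesis by (simp only: e) (rule has_pd_imp_pd[OF has_pd_const])
qed

definition pullback_pd :: "('n::finite \<Rightarrow> 'b::zero) \<Rightarrow> ('n + 'n) \<Rightarrow> 'b" where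
  "pullback_pd D a = (case a of Inl i \<Rightarrow> D i | Inr _ \<Rightarrow> 0)"

lemma pullback_pd_simps[simp]: "pullback_pd D (Inl i) = D i" "pullback_pd D (Inr j) = 0"
  unfolding pullback_pd_def by simp_all

lemma pullback_pd_nth: "pullback_pd D a $ r $ c = pullback_pd (\<lambda>i. D i $ r $ c) a"
  unfolding pullback_pd_def by (cases a) auto

lemma has_pd_comp_base:
  assumes "\<And>i. has_pd i f (base p) (D i)"
  shows "has_pd a (\<lambda>q. f (base q)) p (pullback_pd D a)"
proof (cases a)
  case (Inl i)
  then show ?thesis using assms[of i] unfolding has_pd_def by (simp add: base_line)
next
  case (Inr j)
  then show ?thesis unfolding has_pd_def by (simp add: base_line)
qed

definition fib_dir :: "('n::finite + 'n) \<Rightarrow> real^'n" where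
  "fib_dir a = (case a of Inl _ \<Rightarrow> 0 | Inr j \<Rightarrow> axis j 1)"

lemma fib_dir_simps[simp]: "fib_dir (Inl i) = 0" "fib_dir (Inr j) = axis j 1"
  unfolding fib_dir_def by simp_all

lemma has_pd_vec_fib: "has_pd_vec a fib p (fib_dir a)"
  unfolding has_pd_vec_def
proof
  fix k
  show "has_pd a (\<lambda>z. fib z $ k) p (fib_dir a $ k)"
  proof (cases a)
    case (Inl i)
    then show ?thesis unfolding has_pd_def fib_dir_def by (simp add: fib_line)
  next
    case (Inr j)
    have "((\<lambda>t. p $ Inr k + t * axis j 1 $ k) has_real_derivative axis j 1 $ k) (at 0)"
      by (auto intro!: derivative_eq_intros)
    then show ?thesis using Inr unfolding has_pd_def fib_dir_def using fib_line(2)[of p _ j]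
      by (simp add: axis_def)
  qed
qed

definition pd_mat_pullback :: "(real^'n::finite \<Rightarrow> real^'n^'n) \<Rightarrow> real^'n \<Rightarrow> ('n + 'n) \<Rightarrow> real^'n^'n" where
  "pd_mat_pullback G x a = pullback_pd (\<lambda>i. pd_mat i G x) a"

lemma has_pd_mat_comp_base:
  assumes "\<And>r c. (\<lambda>z. F z $ r $ c) differentiable (at (base p))"
  shows "has_pd_mat a (\<lambda>q. F (base q)) p (pd_mat_pullback F (base p) a)"
  unfolding has_pd_mat_def pd_mat_pullback_def pullback_pd_nth
  using differentiable_imp_has_pd_entries[OF assms] by (intro allI has_pd_comp_base)

section \<open>The Berger type deformed Sasaki metric in an adapted frame\<close>

definition conn_mat :: "(real^'n::finite \<Rightarrow> real^'n^'n) \<Rightarrow> real^'n \<Rightarrow> real^'n \<Rightarrow> real^'n^'n" where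
  "conn_mat G x y = (\<chi> m i. \<Sum>j\<in>UNIV. christoffel G x m i j * y $ j)"

lemma conn_eq_conn_mat: "conn G x y X = conn_mat G x y *v X"
  unfolding conn_def conn_mat_def matrix_vector_mult_def vec_eq_iff
  by (simp add: sum_distrib_right sum_distrib_left mult.commute mult.left_commute)

definition conn_mat_tb :: "(real^'n::finite \<Rightarrow> real^'n^'n) \<Rightarrow> real^('n + 'n) \<Rightarrow> real^'n^'n" where
  "conn_mat_tb G q = conn_mat G (base q) (fib q)"

lemma conn_mat_tb_column: "(\<chi> b. conn_mat_tb G p $ b $ i) = christoffel_mat G (base p) i *v fib p"
  unfolding vec_eq_iff conn_mat_tb_def conn_mat_def christoffel_mat_def matrix_vector_mult_def by simp

definition hv_mat :: "real^'n^'n \<Rightarrow> real^('n::finite+'n)^('n+'n)" where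
  "hv_mat N = block_mat (mat 1) 0 N (mat 1)"

lemma hv_mat_mulv: "hv_mat N *v p = pair_tb (base p) (fib p + N *v base p)"
proof -
  have "p = pair_tb (base p) (fib p)" unfolding pair_tb_eq_iff by simp
  then have "hv_mat N *v p = hv_mat N *v pair_tb (base p) (fib p)" by simp
  also have "\<dots> = pair_tb (base p) (fib p + N *v base p)" unfolding hv_mat_def block_mat_mulv by (simp add: add.commute)
  finally show ?thesis .
qed

lemma hv_mat_inverse: "hv_mat N ** hv_mat (- N) = mat 1" "hv_mat (- N) ** hv_mat N = mat 1"
  unfolding hv_mat_def block_mat_mult by (simp_all add: mat_1_block_mat)

lemma transpose_hv_mat: "transpose (hv_mat N) = block_mat (mat 1) (transpose N) 0 (mat 1)"
  unfolding hv_mat_def block_mat_transpose by simp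

definition fibre_metric :: "real \<Rightarrow> real^'n^'n \<Rightarrow> real^'n \<Rightarrow> real^'n::finite^'n" where
  "fibre_metric \<delta> g w = g + (\<delta>^2) *\<^sub>R outer w w"

lemma inner_fibre_metric: "v \<bullet> (fibre_metric \<delta> g w *v v') = v \<bullet> (g *v v') + \<delta>^2 * (v \<bullet> w) * (v' \<bullet> w)"
  unfolding fibre_metric_def by (simp add: matrix_vector_mult_add_rdistrib scaleR_mat_mulv outer_mulv
      inner_add_right inner_commute)

lemma fibre_metric_posdef:
  assumes "\<forall>v. v \<noteq> 0 \<longrightarrow> v \<bullet> (g *v v) > 0"
  shows "\<forall>v. v \<noteq> 0 \<longrightarrow> v \<bullet> (fibre_metric \<delta> g w *v v) > 0"
proof (intro allI impI)
  fix v :: "real^'a" assume "v \<noteq> 0"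
  then have "v \<bullet> (g *v v) > 0" using assms by blast
  moreover have "\<delta>^2 * (v \<bullet> w) * (v \<bullet> w) \<ge> 0" by (simp add: mult.assoc)
  ultimately show "v \<bullet> (fibre_metric \<delta> g w *v v) > 0" unfolding inner_fibre_metric by linarith
qed

definition block_diag :: "real^'n^'n \<Rightarrow> real^'n^'n \<Rightarrow> real^('n::finite+'n)^('n+'n)" where
  "block_diag g K = block_mat g 0 0 K"

lemma block_diag_inverse: "g ** gi = mat 1 \<Longrightarrow> K ** Ki = mat 1 \<Longrightarrow> block_diag g K ** block_diag gi Ki = mat 1"
  unfolding block_diag_def block_mat_mult by (simp add: mat_1_block_mat)

definition phiu_flat :: "(real^'n::finite \<Rightarrow> real^'n^'n) \<Rightarrow> (real^'n \<Rightarrow> real^'n^'n) \<Rightarrow> real^('n+'n) \<Rightarrow> real^'n" where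
  "phiu_flat G \<phi> p = G (base p) *v (\<phi> (base p) *v fib p)"

abbreviation gBS_fibre :: "real \<Rightarrow> (real^'n::finite \<Rightarrow> real^'n^'n) \<Rightarrow> (real^'n \<Rightarrow> real^'n^'n)
    \<Rightarrow> real^('n + 'n) \<Rightarrow> real^'n^'n" where
  "gBS_fibre \<delta> G \<phi> p \<equiv> fibre_metric \<delta> (G (base p)) (phiu_flat G \<phi> p)"

abbreviation gBS_diag :: "real \<Rightarrow> (real^'n::finite \<Rightarrow> real^'n^'n) \<Rightarrow> (real^'n \<Rightarrow> real^'n^'n)
    \<Rightarrow> real^('n + 'n) \<Rightarrow> real^('n + 'n)^('n + 'n)" where
  "gBS_diag \<delta> G \<phi> p \<equiv> block_diag (G (base p)) (gBS_fibre \<delta> G \<phi> p)"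

abbreviation gBS_inverse :: "real \<Rightarrow> (real^'n::finite \<Rightarrow> real^'n^'n) \<Rightarrow> (real^'n \<Rightarrow> real^'n^'n)
    \<Rightarrow> real^('n + 'n) \<Rightarrow> real^('n + 'n)^('n + 'n)" where
  "gBS_inverse \<delta> G \<phi> p \<equiv> hv_mat (- conn_mat_tb G p)
     ** block_diag (matrix_inv (G (base p))) (matrix_inv (gBS_fibre \<delta> G \<phi> p)) ** transpose (hv_mat (- conn_mat_tb G p))"

lemma gBS_eq_inner: "gBS \<delta> G \<phi> p \<xi> \<eta> = (hv_mat (conn_mat G (base p) (fib p)) *v \<xi>) \<bullet>
     (gBS_diag \<delta> G \<phi> p *v (hv_mat (conn_mat G (base p) (fib p)) *v \<eta>))"
  unfolding gBS_def Let_def hv_mat_mulv block_diag_def block_mat_mulv inner_pair_tb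
    inner_fibre_metric hcomp_def vcomp_def conn_eq_conn_mat gm_def phiu_flat_def
  by (simp add: inner_commute inner_fibre_metric)

lemma gBS_matrix_factor: "gBS_matrix \<delta> G \<phi> p = transpose (hv_mat (conn_mat G (base p) (fib p))) **
    gBS_diag \<delta> G \<phi> p ** hv_mat (conn_mat G (base p) (fib p))"
  unfolding gBS_matrix_def vec_eq_iff congruence_entry gBS_eq_inner by simp

lemma gBS_matrix_fun: "gBS_matrix \<delta> G \<phi> =
    (\<lambda>q. transpose (hv_mat (conn_mat_tb G q)) ** gBS_diag \<delta> G \<phi> q ** hv_mat (conn_mat_tb G q))"
  by (rule ext) (simp add: gBS_matrix_factor conn_mat_tb_def)

lemma fibre_metric_inverse:
  assumes "riem_metric U G" "x \<in> U"
  shows "fibre_metric \<delta> (G x) w ** matrix_inv (fibre_metric \<delta> (G x) w) = mat 1"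
  using assms unfolding riem_metric_def by (intro posdef_matrix_inv fibre_metric_posdef) auto

lemma congruence_inverse_block: "hv_mat (- N) ** block_diag gi Ki ** transpose (hv_mat (- N)) =
   block_mat gi (gi ** transpose (- N)) ((- N) ** gi) ((- N) ** gi ** transpose (- N) + Ki)"
  unfolding transpose_hv_mat unfolding hv_mat_def block_diag_def block_mat_mult by simp

lemma congruence_inverse_row: "(hv_mat (- N) ** block_diag gi Ki ** transpose (hv_mat (- N))) $ Inl l $ Inl i = gi $ l $ i"
   "(hv_mat (- N) ** block_diag gi Ki ** transpose (hv_mat (- N))) $ Inl l $ Inr b = - (\<Sum>j\<in>UNIV. gi $ l $ j * N $ b $ j)"
  unfolding congruence_inverse_block by (simp_all add: matrix_matrix_mult_def transpose_def sum_negf)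

lemma gBS_matrix_inverse:
  assumes "riem_metric U G" "base p \<in> U"
  shows "gBS_matrix \<delta> G \<phi> p ** (gBS_inverse \<delta> G \<phi> p) = mat 1"
    "matrix_inv (gBS_matrix \<delta> G \<phi> p) = gBS_inverse \<delta> G \<phi> p"
proof -
  show 1: "gBS_matrix \<delta> G \<phi> p ** (gBS_inverse \<delta> G \<phi> p) = mat 1"
    unfolding gBS_matrix_fun
    by (intro congruence_inverse block_diag_inverse hv_mat_inverse riem_metric_inverse[OF assms] fibre_metric_inverse[OF assms])
  then show "matrix_inv (gBS_matrix \<delta> G \<phi> p) = gBS_inverse \<delta> G \<phi> p"
    by (rule matrix_inv_unique)
qed

lemma gBS_matrix_symmetric:
  assumes "riem_metric U G" "base p \<in> U"
  shows "transpose (gBS_matrix \<delta> G \<phi> p) = gBS_matrix \<delta> G \<phi> p"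
proof -
  have g: "transpose (G (base p)) = G (base p)" using assms unfolding riem_metric_def by blast
  have K: "transpose (gBS_fibre \<delta> G \<phi> p) = gBS_fibre \<delta> G \<phi> p"
    unfolding fibre_metric_def transpose_add transpose_scalar transpose_outer g ..
  have D: "transpose (gBS_diag \<delta> G \<phi> p) = gBS_diag \<delta> G \<phi> p"
    unfolding block_diag_def block_mat_transpose g K by simp
  show ?thesis unfolding gBS_matrix_fun by (simp add: matrix_transpose_mul D matrix_mul_assoc)
qed

section \<open>Partial derivatives of the Berger type deformed Sasaki metric\<close>

lemma has_pd_conn_mat_tb_entry:
  assumes "riem_metric U G" "open U" "base p \<in> U"
  shows "has_pd a (\<lambda>q. conn_mat_tb G q $ r $ c) p
     (\<Sum>j\<in>UNIV. pullback_pd (\<lambda>i. pd i (\<lambda>z. christoffel G z r c j) (base p)) a * fib p $ j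
      + christoffel G (base p) r c j * fib_dir a $ j)"
proof -
  have "has_pd a (\<lambda>q. christoffel G (base q) r c j) p (pullback_pd (\<lambda>i. pd i (\<lambda>z. christoffel G z r c j) (base p)) a)" for j
    by (rule has_pd_comp_base, rule has_pd_christoffel[OF assms])
  moreover have "has_pd a (\<lambda>q. fib q $ j) p (fib_dir a $ j)" for j using has_pd_vec_fib unfolding has_pd_vec_def by blast
  ultimately show ?thesis unfolding conn_mat_tb_def conn_mat_def by (simp, intro has_pd_sum has_pd_mult) auto
qed

lemma has_pd_mat_conn_mat_tb:
  assumes "riem_metric U G" "open U" "base p \<in> U"
  shows "has_pd_mat a (conn_mat_tb G) p (pd_mat a (conn_mat_tb G) p)"
  using has_pd_conn_mat_tb_entry[OF assms] by (blast intro: has_pd_mat_pd_mat)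

definition pd_phiu_flat :: "(real^'n::finite \<Rightarrow> real^'n^'n) \<Rightarrow> (real^'n \<Rightarrow> real^'n^'n)
    \<Rightarrow> real^('n + 'n) \<Rightarrow> 'n + 'n \<Rightarrow> real^'n" where
  "pd_phiu_flat G \<phi> p a = pd_mat_pullback G (base p) a *v (\<phi> (base p) *v fib p)
     + G (base p) *v (pd_mat_pullback \<phi> (base p) a *v fib p + \<phi> (base p) *v fib_dir a)"

definition pd_fibre_metric :: "real \<Rightarrow> (real^'n::finite \<Rightarrow> real^'n^'n) \<Rightarrow> (real^'n \<Rightarrow> real^'n^'n)
    \<Rightarrow> real^('n + 'n) \<Rightarrow> 'n + 'n \<Rightarrow> real^'n^'n" where
  "pd_fibre_metric \<delta> G \<phi> p a = pd_mat_pullback G (base p) a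
     + \<delta>^2 *\<^sub>R (outer (pd_phiu_flat G \<phi> p a) (phiu_flat G \<phi> p) + outer (phiu_flat G \<phi> p) (pd_phiu_flat G \<phi> p a))"

lemma has_pd_vec_phiu_flat:
  assumes "\<And>r c. (\<lambda>z. G z $ r $ c) differentiable (at (base p))"
    "\<And>r c. (\<lambda>z. \<phi> z $ r $ c) differentiable (at (base p))"
  shows "has_pd_vec a (phiu_flat G \<phi>) p (pd_phiu_flat G \<phi> p a)"
proof -
  have "has_pd_vec a (\<lambda>q. \<phi> (base q) *v fib q) p (pd_mat_pullback \<phi> (base p) a *v fib p + \<phi> (base p) *v fib_dir a)"
    by (rule has_pd_mat_vec_mult[OF has_pd_mat_comp_base[OF assms(2)] has_pd_vec_fib])
  from has_pd_mat_vec_mult[OF has_pd_mat_comp_base[OF assms(1)] this]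
  show ?thesis unfolding phiu_flat_def[abs_def] pd_phiu_flat_def .
qed

lemma has_pd_mat_fibre_metric:
  assumes "\<And>r c. (\<lambda>z. G z $ r $ c) differentiable (at (base p))"
    "\<And>r c. (\<lambda>z. \<phi> z $ r $ c) differentiable (at (base p))"
  shows "has_pd_mat a (\<lambda>q. gBS_fibre \<delta> G \<phi> q) p (pd_fibre_metric \<delta> G \<phi> p a)"
  unfolding fibre_metric_def pd_fibre_metric_def
  by (intro has_pd_mat_add has_pd_mat_comp_base has_pd_mat_scaleR has_pd_mat_outer has_pd_vec_phiu_flat assms)

lemma has_pd_mat_block_diag:
  assumes "\<And>r c. (\<lambda>z. G z $ r $ c) differentiable (at (base p))"
    "\<And>r c. (\<lambda>z. \<phi> z $ r $ c) differentiable (at (base p))"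
  shows "has_pd_mat a (\<lambda>q. gBS_diag \<delta> G \<phi> q) p
    (block_mat (pd_mat_pullback G (base p) a) 0 0 (pd_fibre_metric \<delta> G \<phi> p a))"
  unfolding block_diag_def
  by (intro has_pd_mat_block_mat has_pd_mat_comp_base has_pd_mat_fibre_metric has_pd_mat_const assms)

lemma has_pd_mat_hv_mat:
  assumes "riem_metric U G" "open U" "base p \<in> U"
  shows "has_pd_mat a (\<lambda>q. hv_mat (conn_mat_tb G q)) p (block_mat 0 0 (pd_mat a (conn_mat_tb G) p) 0)"
  unfolding hv_mat_def by (intro has_pd_mat_block_mat has_pd_mat_const has_pd_mat_conn_mat_tb[OF assms])

lemma trace_hv_mat_vertical: "trace (hv_mat (- N) ** block_mat 0 0 X 0) = 0"
  unfolding hv_mat_def block_mat_mult trace_block_mat by (simp add: trace_def)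

lemma has_pd_gBS_matrix_trace:
  assumes "riem_metric U G" "open U" "base p \<in> U"
    "\<And>r c. (\<lambda>z. \<phi> z $ r $ c) differentiable (at (base p))"
  shows "\<exists>dG. (\<forall>a. has_pd_mat a (gBS_matrix \<delta> G \<phi>) p (dG a)) \<and>
     (\<forall>a. trace (matrix_inv (gBS_matrix \<delta> G \<phi> p) ** dG a) =
        trace (matrix_inv (G (base p)) ** pd_mat_pullback G (base p) a)
        + trace (matrix_inv (gBS_fibre \<delta> G \<phi> p) ** pd_fibre_metric \<delta> G \<phi> p a))"
proof -
  have dG: "\<And>r c. (\<lambda>z. G z $ r $ c) differentiable (at (base p))" using riem_metric_differentiable(1)[OF assms(1-3)] .
  define P where "P = hv_mat (conn_mat_tb G p)"
  define D where "D = gBS_diag \<delta> G \<phi> p"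
  define dP where "dP a = block_mat 0 0 (pd_mat a (conn_mat_tb G) p) 0" for a
  define dD where "dD a = block_mat (pd_mat_pullback G (base p) a) 0 0 (pd_fibre_metric \<delta> G \<phi> p a)" for a
  define dGB where "dGB a = (transpose (dP a) ** D + transpose P ** dD a) ** P + (transpose P ** D) ** dP a" for a
  have m: "has_pd_mat a (gBS_matrix \<delta> G \<phi>) p (dGB a)" for a
    unfolding gBS_matrix_fun dGB_def P_def D_def dP_def dD_def
    by (intro has_pd_mat_mult has_pd_mat_transpose has_pd_mat_hv_mat[OF assms(1-3)] has_pd_mat_block_diag dG assms(4))
  have t: "trace (matrix_inv (gBS_matrix \<delta> G \<phi> p) ** dGB a) =
        trace (matrix_inv (G (base p)) ** pd_mat_pullback G (base p) a)
        + trace (matrix_inv (gBS_fibre \<delta> G \<phi> p) ** pd_fibre_metric \<delta> G \<phi> p a)" for a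
  proof -
    have "trace (matrix_inv (gBS_matrix \<delta> G \<phi> p) ** dGB a) =
        trace (block_diag (matrix_inv (G (base p))) (matrix_inv (gBS_fibre \<delta> G \<phi> p)) ** dD a)"
      unfolding gBS_matrix_inverse(2)[OF assms(1,3)] dGB_def
    proof (rule trace_congruence_derivative)
      show "P ** hv_mat (- conn_mat_tb G p) = mat 1" "hv_mat (- conn_mat_tb G p) ** P = mat 1" unfolding P_def by (rule hv_mat_inverse)+
      have "D ** block_diag (matrix_inv (G (base p))) (matrix_inv (gBS_fibre \<delta> G \<phi> p)) = mat 1"
        unfolding D_def by (intro block_diag_inverse riem_metric_inverse[OF assms(1,3)] fibre_metric_inverse[OF assms(1,3)])
      then show "block_diag (matrix_inv (G (base p))) (matrix_inv (gBS_fibre \<delta> G \<phi> p)) ** D = mat 1"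
        using matrix_left_right_inverse by blast
      show "trace (hv_mat (- conn_mat_tb G p) ** dP a) = 0" unfolding dP_def by (rule trace_hv_mat_vertical)
    qed
    also have "\<dots> = trace (matrix_inv (G (base p)) ** pd_mat_pullback G (base p) a)
        + trace (matrix_inv (gBS_fibre \<delta> G \<phi> p) ** pd_fibre_metric \<delta> G \<phi> p a)"
      unfolding dD_def block_diag_def block_mat_mult trace_block_mat by simp
    finally show ?thesis .
  qed
  show ?thesis using m t by blast
qed

(* The one place where nabla phi = 0 is used. *)
lemma horizontal_pd_phiu_flat:
  assumes "anti_paraKaehler U G \<phi>" "base p \<in> U"
  shows "pd_phiu_flat G \<phi> p (Inl i) - (\<Sum>b\<in>UNIV. conn_mat_tb G p $ b $ i *\<^sub>R pd_phiu_flat G \<phi> p (Inr b))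
      = transpose (christoffel_mat G (base p) i) *v phiu_flat G \<phi> p"
proof -
  have R: "riem_metric U G" "open U" and C: "\<forall>x\<in>U. \<forall>i l j. covd_phi G \<phi> x i l j = 0"
    using assms(1) unfolding anti_paraKaehler_def by auto
  define g where "g = G (base p)"
  define f where "f = \<phi> (base p)"
  define T where "T = christoffel_mat G (base p) i"
  define y where "y = fib p"
  have dwi: "pd_phiu_flat G \<phi> p (Inl i) = (transpose T ** g + g ** T) *v (f *v y) + g *v ((f ** T - T ** f) *v y)"
    unfolding pd_phiu_flat_def pd_mat_pullback_def pullback_pd_simps pd_mat_metric[OF R assms(2)]
      pd_mat_parallel[OF C assms(2)] g_def f_def T_def y_def
    by simp
  have dwb: "pd_phiu_flat G \<phi> p (Inr b) = (g ** f) *v axis b 1" for b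
    unfolding pd_phiu_flat_def pd_mat_pullback_def pullback_pd_simps g_def f_def by (simp add: matrix_vector_mul_assoc)
  have S: "(\<Sum>b\<in>UNIV. conn_mat_tb G p $ b $ i *\<^sub>R pd_phiu_flat G \<phi> p (Inr b)) = g *v (f *v (T *v y))"
    unfolding dwb sum_axis conn_mat_tb_column T_def y_def by (simp add: matrix_vector_mul_assoc matrix_mul_assoc)
  show ?thesis unfolding dwi S phiu_flat_def g_def[symmetric] f_def[symmetric] T_def[symmetric] y_def[symmetric]
    by (simp add: matrix_vector_mult_add_rdistrib matrix_vector_mult_diff_rdistrib matrix_vector_mult_diff_distrib
        matrix_vector_right_distrib matrix_vector_mul_assoc[symmetric] del: transpose_matrix_vector)
qed

lemma horizontal_pd_fibre_metric:
  assumes "anti_paraKaehler U G \<phi>" "base p \<in> U"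
  shows "pd_fibre_metric \<delta> G \<phi> p (Inl i) - (\<Sum>b\<in>UNIV. conn_mat_tb G p $ b $ i *\<^sub>R pd_fibre_metric \<delta> G \<phi> p (Inr b))
     = transpose (christoffel_mat G (base p) i) ** gBS_fibre \<delta> G \<phi> p + gBS_fibre \<delta> G \<phi> p ** christoffel_mat G (base p) i"
proof -
  have R: "riem_metric U G" "open U"
    using assms(1) unfolding anti_paraKaehler_def by auto
  define w where "w = phiu_flat G \<phi> p"
  define T where "T = christoffel_mat G (base p) i"
  define g where "g = G (base p)"
  define c where "c b = conn_mat_tb G p $ b $ i" for b
  define SW where "SW = (\<Sum>b\<in>UNIV. c b *\<^sub>R pd_phiu_flat G \<phi> p (Inr b))"
  have hw: "pd_phiu_flat G \<phi> p (Inl i) - SW = transpose T *v w"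
    unfolding SW_def c_def T_def w_def by (rule horizontal_pd_phiu_flat[OF assms])
  have dKb: "pd_fibre_metric \<delta> G \<phi> p (Inr b) = \<delta>^2 *\<^sub>R
      (outer (pd_phiu_flat G \<phi> p (Inr b)) w + outer w (pd_phiu_flat G \<phi> p (Inr b)))" for b
    unfolding pd_fibre_metric_def pd_mat_pullback_def w_def by simp
  have dKi: "pd_fibre_metric \<delta> G \<phi> p (Inl i) = (transpose T ** g + g ** T)
      + \<delta>^2 *\<^sub>R (outer (pd_phiu_flat G \<phi> p (Inl i)) w + outer w (pd_phiu_flat G \<phi> p (Inl i)))"
    unfolding pd_fibre_metric_def pd_mat_pullback_def w_def pullback_pd_simps pd_mat_metric[OF R assms(2)] T_def g_def by simp
  have sK: "(\<Sum>b\<in>UNIV. c b *\<^sub>R pd_fibre_metric \<delta> G \<phi> p (Inr b)) = \<delta>^2 *\<^sub>R (outer SW w + outer w SW)"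
    unfolding dKb SW_def outer_sum_left outer_sum_right
    by (simp add: scaleR_sum_right sum.distrib scaleR_add_right mult.commute)
  have "pd_fibre_metric \<delta> G \<phi> p (Inl i) - (\<Sum>b\<in>UNIV. c b *\<^sub>R pd_fibre_metric \<delta> G \<phi> p (Inr b))
      = (transpose T ** g + g ** T) + \<delta>^2 *\<^sub>R (outer (pd_phiu_flat G \<phi> p (Inl i) - SW) w
        + outer w (pd_phiu_flat G \<phi> p (Inl i) - SW))"
    unfolding dKi sK outer_diff_left outer_diff_right by (simp add: algebra_simps)
  also have "\<dots> = (transpose T ** g + g ** T) + \<delta>^2 *\<^sub>R (transpose T ** outer w w + outer w w ** T)"
    unfolding hw outer_mulv_left outer_mulv_right by simp
  also have "\<dots> = transpose T ** fibre_metric \<delta> g w + fibre_metric \<delta> g w ** T"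
    unfolding fibre_metric_def matrix_add_ldistrib matrix_add_rdistrib matrix_scalar_ac scalar_matrix_assoc[symmetric]
    by (simp add: algebra_simps)
  finally show ?thesis unfolding c_def w_def T_def g_def .
qed

lemma trace_horizontal_pd_fibre_metric:
  assumes "anti_paraKaehler U G \<phi>" "base p \<in> U"
  shows "trace (matrix_inv (gBS_fibre \<delta> G \<phi> p) ** pd_fibre_metric \<delta> G \<phi> p (Inl i))
    - (\<Sum>b\<in>UNIV. conn_mat_tb G p $ b $ i * trace (matrix_inv (gBS_fibre \<delta> G \<phi> p) ** pd_fibre_metric \<delta> G \<phi> p (Inr b)))
    = 2 * trace (christoffel_mat G (base p) i)"
proof -
  have R: "riem_metric U G" using assms(1) unfolding anti_paraKaehler_def by auto
  define K where "K = gBS_fibre \<delta> G \<phi> p"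
  have K1: "K ** matrix_inv K = mat 1" unfolding K_def by (rule fibre_metric_inverse[OF R assms(2)])
  then have K2: "matrix_inv K ** K = mat 1" using matrix_left_right_inverse by blast
  have "trace (matrix_inv K ** pd_fibre_metric \<delta> G \<phi> p (Inl i)) - (\<Sum>b\<in>UNIV. conn_mat_tb G p $ b $ i * trace (matrix_inv K ** pd_fibre_metric \<delta> G \<phi> p (Inr b)))
     = trace (matrix_inv K ** (pd_fibre_metric \<delta> G \<phi> p (Inl i)
        - (\<Sum>b\<in>UNIV. conn_mat_tb G p $ b $ i *\<^sub>R pd_fibre_metric \<delta> G \<phi> p (Inr b))))"
    unfolding matrix_diff_ldistrib trace_sub trace_mult_sum ..
  also have "\<dots> = 2 * trace (christoffel_mat G (base p) i)"
    unfolding horizontal_pd_fibre_metric[OF assms] K_def[symmetric] by (rule trace_inverse_compat[OF K1 K2])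
  finally show ?thesis unfolding K_def .
qed

section \<open>Contracted Christoffel symbols of the Berger type deformed Sasaki metric\<close>

definition gBS_inv_row :: "(real^'n::finite \<Rightarrow> real^'n^'n) \<Rightarrow> 'n \<Rightarrow> 'n + 'n \<Rightarrow> real^('n + 'n) \<Rightarrow> real" where
  "gBS_inv_row G l e q = (case e of Inl i \<Rightarrow> matrix_inv (G (base q)) $ l $ i
      | Inr b \<Rightarrow> - (\<Sum>j\<in>UNIV. matrix_inv (G (base q)) $ l $ j * conn_mat_tb G q $ b $ j))"

lemma gBS_inv_row_eq:
  assumes "riem_metric U G" "q \<in> tb U"
  shows "matrix_inv (gBS_matrix \<delta> G \<phi> q) $ Inl l $ e = gBS_inv_row G l e q"
proof -
  have q: "base q \<in> U" using assms(2) unfolding tb_def by simp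
  show ?thesis unfolding gBS_matrix_inverse(2)[OF assms(1) q] gBS_inv_row_def by (cases e) (auto simp: congruence_inverse_row)
qed

lemma has_pd_gBS_inv_row_Inl:
  assumes "riem_metric U G" "open U" "base p \<in> U"
  shows "has_pd a (gBS_inv_row G l (Inl i)) p (pullback_pd (\<lambda>k. pd k (\<lambda>z. matrix_inv (G z) $ l $ i) (base p)) a)"
  unfolding gBS_inv_row_def sum.case by (rule has_pd_comp_base, rule has_pd_metric_inverse[OF assms])

lemma has_pd_gBS_inv_row_Inr:
  assumes "riem_metric U G" "open U" "base p \<in> U"
  shows "has_pd a (gBS_inv_row G l (Inr b)) p
    (- (\<Sum>j\<in>UNIV. pullback_pd (\<lambda>k. pd k (\<lambda>z. matrix_inv (G z) $ l $ j) (base p)) a * conn_mat_tb G p $ b $ j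
        + matrix_inv (G (base p)) $ l $ j *
          (\<Sum>k\<in>UNIV. pullback_pd (\<lambda>i. pd i (\<lambda>z. christoffel G z b j k) (base p)) a * fib p $ k
            + christoffel G (base p) b j k * fib_dir a $ k)))"
proof -
  have "has_pd a (\<lambda>q. matrix_inv (G (base q)) $ l $ j) p
      (pullback_pd (\<lambda>k. pd k (\<lambda>z. matrix_inv (G z) $ l $ j) (base p)) a)" for j
    by (rule has_pd_comp_base, rule has_pd_metric_inverse[OF assms])
  then show ?thesis unfolding gBS_inv_row_def sum.case
    by (intro has_pd_minus has_pd_sum has_pd_mult has_pd_conn_mat_tb_entry[OF assms]) auto
qed

lemma has_pd_gBS_matrix_inv_row:
  assumes "riem_metric U G" "open U" "base p \<in> U"
  shows "has_pd a (\<lambda>z. matrix_inv (gBS_matrix \<delta> G \<phi> z) $ Inl l $ e) p (pd a (gBS_inv_row G l e) p)"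
proof -
  have pT: "p \<in> tb U" using assms(3) unfolding tb_def by simp
  have "has_pd a (gBS_inv_row G l e) p (pd a (gBS_inv_row G l e) p)"
    by (cases e) (auto intro: has_pd_pd has_pd_gBS_inv_row_Inl[OF assms] has_pd_gBS_inv_row_Inr[OF assms])
  then show ?thesis
    by (rule has_pd_transform_open[OF open_tb[OF assms(2)] pT, rotated]) (simp add: gBS_inv_row_eq[OF assms(1)])
qed

lemma sum_pd_gBS_inv_row:
  assumes "riem_metric U G" "open U" "base p \<in> U"
  shows "(\<Sum>a\<in>UNIV. pd a (gBS_inv_row G l a) p)
    = (\<Sum>i\<in>UNIV. pd i (\<lambda>z. matrix_inv (G z) $ l $ i) (base p))
      - (\<Sum>j\<in>UNIV. matrix_inv (G (base p)) $ l $ j * trace (christoffel_mat G (base p) j))"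
proof -
  define gi where "gi = matrix_inv (G (base p))"
  have hor: "pd (Inl i) (gBS_inv_row G l (Inl i)) p = pd i (\<lambda>z. matrix_inv (G z) $ l $ i) (base p)" for i
    using has_pd_imp_pd[OF has_pd_gBS_inv_row_Inl[OF assms]] by simp
  have "pd (Inr b) (gBS_inv_row G l (Inr b)) p = - (\<Sum>j\<in>UNIV. 0 * conn_mat_tb G p $ b $ j + gi $ l $ j *
          (\<Sum>k\<in>UNIV. 0 * fib p $ k + christoffel G (base p) b j k * axis b 1 $ k))" for b
    using has_pd_imp_pd[OF has_pd_gBS_inv_row_Inr[OF assms]] unfolding gi_def by simp
  then have ver: "pd (Inr b) (gBS_inv_row G l (Inr b)) p = - (\<Sum>j\<in>UNIV. gi $ l $ j * christoffel G (base p) b j b)" for b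
    by (simp add: axis_def if_distrib[of "\<lambda>t. _ * t"] cong: if_cong)
  have "(\<Sum>b\<in>UNIV. \<Sum>j\<in>UNIV. gi $ l $ j * christoffel G (base p) b j b)
      = (\<Sum>j\<in>UNIV. \<Sum>b\<in>UNIV. gi $ l $ j * christoffel G (base p) b j b)"
    by (rule sum.swap)
  then show ?thesis unfolding sum_UNIV_Plus hor ver trace_christoffel_mat gi_def
    by (simp add: sum_negf sum_distrib_left)
qed

lemma sum_gBS_inv_row_trace:
  assumes APK: "anti_paraKaehler U G \<phi>" and xU: "base p \<in> U"
  shows "(\<Sum>a\<in>UNIV. matrix_inv (gBS_matrix \<delta> G \<phi> p) $ Inl l $ a *
      (trace (matrix_inv (G (base p)) ** pd_mat_pullback G (base p) a)
       + trace (matrix_inv (gBS_fibre \<delta> G \<phi> p) ** pd_fibre_metric \<delta> G \<phi> p a)))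
    = 4 * (\<Sum>i\<in>UNIV. matrix_inv (G (base p)) $ l $ i * trace (christoffel_mat G (base p) i))"
proof -
  have R: "riem_metric U G" "open U" using APK unfolding anti_paraKaehler_def by auto
  define x where "x = base p"
  define gi where "gi = matrix_inv (G x)"
  define Gi where "Gi = matrix_inv (gBS_matrix \<delta> G \<phi> p)"
  define Ki where "Ki = matrix_inv (fibre_metric \<delta> (G x) (phiu_flat G \<phi> p))"
  define N where "N = conn_mat_tb G p"
  define t where "t b = trace (Ki ** pd_fibre_metric \<delta> G \<phi> p (Inr b))" for b
  have G1: "Gi $ Inl l $ Inl i = gi $ l $ i" for i
    unfolding Gi_def gi_def x_def gBS_matrix_inverse(2)[OF R(1) xU] congruence_inverse_row ..
  have G2: "Gi $ Inl l $ Inr b = - (\<Sum>j\<in>UNIV. gi $ l $ j * N $ b $ j)" for b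
    unfolding Gi_def gi_def x_def N_def gBS_matrix_inverse(2)[OF R(1) xU] congruence_inverse_row ..
  have tr1: "trace (gi ** pd_mat_pullback G x (Inl i)) = 2 * trace (christoffel_mat G x i)" for i
    unfolding pd_mat_pullback_def pullback_pd_simps gi_def x_def trace_pd_mat_metric[OF R xU] ..
  have tr2: "trace (gi ** pd_mat_pullback G x (Inr b)) = 0" for b
    unfolding pd_mat_pullback_def pullback_pd_simps by (simp add: trace_def)
  have hor: "trace (Ki ** pd_fibre_metric \<delta> G \<phi> p (Inl i)) - (\<Sum>b\<in>UNIV. N $ b $ i * t b)
      = 2 * trace (christoffel_mat G x i)" for i
    unfolding Ki_def N_def t_def x_def by (rule trace_horizontal_pd_fibre_metric[OF APK xU])
  have "(\<Sum>b\<in>UNIV. \<Sum>j\<in>UNIV. gi $ l $ j * N $ b $ j * t b) = (\<Sum>j\<in>UNIV. gi $ l $ j * (\<Sum>b\<in>UNIV. N $ b $ j * t b))"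
    by (subst sum.swap) (simp add: sum_distrib_left mult.assoc)
  then have "(\<Sum>a\<in>UNIV. Gi $ Inl l $ a * (trace (gi ** pd_mat_pullback G x a) + trace (Ki ** pd_fibre_metric \<delta> G \<phi> p a)))
      = (\<Sum>i\<in>UNIV. gi $ l $ i * (2 * trace (christoffel_mat G x i) + trace (Ki ** pd_fibre_metric \<delta> G \<phi> p (Inl i))
          - (\<Sum>b\<in>UNIV. N $ b $ i * t b)))"
    unfolding sum_UNIV_Plus G1 G2 tr1 tr2 t_def[symmetric]
    by (simp add: sum_negf sum_distrib_right sum_subtractf right_diff_distrib)
  also have "\<dots> = 4 * (\<Sum>i\<in>UNIV. gi $ l $ i * trace (christoffel_mat G x i))"
    using hor by (simp add: sum_distrib_left algebra_simps)
  finally show ?thesis unfolding Gi_def gi_def Ki_def x_def .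
qed

lemma contracted_christoffel_gBS:
  assumes APK: "anti_paraKaehler U G \<phi>" and xU: "base p \<in> U"
  shows "(\<Sum>a\<in>UNIV. \<Sum>b\<in>UNIV. matrix_inv (gBS_matrix \<delta> G \<phi> p) $ a $ b
      * christoffel (gBS_matrix \<delta> G \<phi>) p (Inl l) a b)
    = - (\<Sum>i\<in>UNIV. pd i (\<lambda>z. matrix_inv (G z) $ l $ i) (base p))
      - (\<Sum>i\<in>UNIV. matrix_inv (G (base p)) $ l $ i * trace (christoffel_mat G (base p) i))"
proof -
  have R: "riem_metric U G" "open U" using APK unfolding anti_paraKaehler_def by auto
  have "(\<lambda>z. \<phi> z $ r $ c) differentiable (at (base p))" for r c
    using APK xU unfolding anti_paraKaehler_def apc_structure_def by (intro smooth_on_differentiable) auto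
  then obtain dG where dG: "\<And>a. has_pd_mat a (gBS_matrix \<delta> G \<phi>) p (dG a)"
    and tr: "\<And>a. trace (matrix_inv (gBS_matrix \<delta> G \<phi> p) ** dG a)
      = trace (matrix_inv (G (base p)) ** pd_mat_pullback G (base p) a)
        + trace (matrix_inv (gBS_fibre \<delta> G \<phi> p) ** pd_fibre_metric \<delta> G \<phi> p a)"
    using has_pd_gBS_matrix_trace[OF R xU] by blast
  have pT: "p \<in> tb U" using xU unfolding tb_def by simp
  have inv: "matrix_inv (gBS_matrix \<delta> G \<phi> z) ** gBS_matrix \<delta> G \<phi> z = mat 1" if "z \<in> tb U" for z
    using that gBS_matrix_inverse[OF R(1)] matrix_left_right_inverse unfolding tb_def by (metis mem_Collect_eq)
  have sym: "transpose (matrix_inv (gBS_matrix \<delta> G \<phi> p)) = matrix_inv (gBS_matrix \<delta> G \<phi> p)"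
    by (rule symmetric_matrix_inv[OF _ gBS_matrix_symmetric[OF R(1) xU]]) (metis gBS_matrix_inverse(1,2)[OF R(1) xU])
  have dGi: "has_pd a (\<lambda>z. matrix_inv (gBS_matrix \<delta> G \<phi> z) $ Inl l $ e) p ((\<chi> e. pd a (gBS_inv_row G l e) p) $ e)" for a e
    unfolding vec_lambda_beta by (rule has_pd_gBS_matrix_inv_row[OF R xU])
  have "(\<Sum>a\<in>UNIV. \<Sum>b\<in>UNIV. matrix_inv (gBS_matrix \<delta> G \<phi> p) $ a $ b
      * christoffel (gBS_matrix \<delta> G \<phi>) p (Inl l) a b)
     = - (\<Sum>a\<in>UNIV. (\<chi> e. pd a (gBS_inv_row G l e) p) $ a)
       - (1/2) * (\<Sum>a\<in>UNIV. matrix_inv (gBS_matrix \<delta> G \<phi> p) $ Inl l $ a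
          * trace (matrix_inv (gBS_matrix \<delta> G \<phi> p) ** dG a))"
    by (rule contracted_christoffel_pd_inverse[OF open_tb[OF R(2)] pT inv sym dG dGi])
  then show ?thesis
    unfolding tr sum_gBS_inv_row_trace[OF APK xU] using sum_pd_gBS_inv_row[OF R xU, of l] by simp
qed

section \<open>The tension field of the projection\<close>

lemma sum_indicator_Inl:
  fixes X :: "'a::finite \<Rightarrow> 'a \<Rightarrow> real" and a b :: "'a + 'a"
  shows "(\<Sum>m\<in>UNIV. \<Sum>q\<in>UNIV. X m q * (if a = Inl m then 1 else 0) * (if b = Inl q then 1 else 0))
      = (case a of Inl m \<Rightarrow> (case b of Inl q \<Rightarrow> X m q | Inr _ \<Rightarrow> 0) | Inr _ \<Rightarrow> 0)"
  by (cases a; cases b) (simp_all add: if_distrib[of "\<lambda>t. _ * t"] sum.delta' cong: if_cong)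

lemma tension_base_eq:
  "tension M H base p l = - (\<Sum>a\<in>UNIV. \<Sum>b\<in>UNIV. matrix_inv (M p) $ a $ b * christoffel M p (Inl l) a b)
     + (\<Sum>m\<in>UNIV. \<Sum>q\<in>UNIV. matrix_inv (M p) $ Inl m $ Inl q * christoffel H (base p) l m q)"
proof -
  have "(\<Sum>c\<in>UNIV. christoffel M p c a b * (if c = Inl l then 1 else 0)) = christoffel M p (Inl l) a b" for a b
    by (simp add: if_distrib[of "\<lambda>t. _ * t"] cong: if_cong)
  then show ?thesis
    unfolding tension_def pd_pd_base_nth pd_base_nth sum_indicator_Inl
    by (simp add: sum_UNIV_Plus sum_negf sum.distrib distrib_left right_diff_distrib sum_subtractf)
qed

lemma tension_base_gBS:
  assumes APK: "anti_paraKaehler U G \<phi>" and xU: "base p \<in> U"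
  shows "tension (gBS_matrix \<delta> G \<phi>) H base p l =
    (\<Sum>i\<in>UNIV. \<Sum>j\<in>UNIV. matrix_inv (G (base p)) $ i $ j * (christoffel H (base p) l i j - christoffel G (base p) l i j))"
proof -
  have R: "riem_metric U G" "open U" using APK unfolding anti_paraKaehler_def by auto
  have xx: "matrix_inv (gBS_matrix \<delta> G \<phi> p) $ Inl m $ Inl q = matrix_inv (G (base p)) $ m $ q" for m q
    unfolding gBS_matrix_inverse(2)[OF R(1) xU] congruence_inverse_row(1) ..
  show ?thesis
    unfolding tension_base_eq contracted_christoffel_gBS[OF APK xU] xx contracted_christoffel_metric[OF R xU, symmetric]
    by (simp add: right_diff_distrib sum_subtractf)
qed

theorem mainTheorem3:
  fixes U :: "(real^'n::finite) set"
    and G H \<phi> \<phi>1 :: "real^'n \<Rightarrow> real^'n^'n"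
    and \<delta> :: real
  assumes "anti_paraKaehler U G \<phi>"
    and "riem_metric U H"
    and "apc_structure U \<phi>1"
    and "anti_paraHermitian U H \<phi>1"
  shows "harmonic_map (tb U) (gBS_matrix \<delta> G \<phi>) H base \<longleftrightarrow>
    (\<forall>x\<in>U. \<forall>l. (\<Sum>i\<in>UNIV. \<Sum>j\<in>UNIV. matrix_inv (G x) $ i $ j *
        (christoffel H x l i j - christoffel G x l i j)) = 0)"
proof
  assume harmonic: "harmonic_map (tb U) (gBS_matrix \<delta> G \<phi>) H base"
  show "\<forall>x\<in>U. \<forall>l. (\<Sum>i\<in>UNIV. \<Sum>j\<in>UNIV. matrix_inv (G x) $ i $ j *
      (christoffel H x l i j - christoffel G x l i j)) = 0"
  proof (intro ballI allI)
    fix x l assume "x \<in> U"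
    then have "pair_tb x 0 \<in> tb U" unfolding tb_def by simp
    then have "tension (gBS_matrix \<delta> G \<phi>) H base (pair_tb x 0) l = 0"
      using harmonic unfolding harmonic_map_def by blast
    then show "(\<Sum>i\<in>UNIV. \<Sum>j\<in>UNIV. matrix_inv (G x) $ i $ j *
        (christoffel H x l i j - christoffel G x l i j)) = 0"
      using tension_base_gBS[OF assms(1)] \<open>x \<in> U\<close> by simp
  qed
qed (simp add: harmonic_map_def tb_def tension_base_gBS[OF assms(1)])

end
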